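(* Let $M_P$ be the Pappus configuration on $[9]$ with lines $\{1,2,3\},\{1,6,8\},\{7,8,9\},\{2,6,9\},\{2,4,7\},\{3,5,9\},\{3,4,8\},\{1,5,7\},\{4,5,6\}$. Let $C$ be the matroid on $[9]$ obtained by identifying $1$ with $3$, $4$ with $6$, and $7$ with $9$; explicitly, with classes $A=\{1,3\}$, $B=\{4,6\}$, $C'=\{7,9\}$, $\{2\},\{5\},\{8\}$ and quotient map $\pi$, $C$ has rank function $S\mapsto\operatorname{rank}_P(\pi(S))$ where $P$ is the point-line configuration on these six classes with lines $\{A,B,8\},\{B,2,C'\},\{C',5,A\}$. Then for every automorphism $\sigma$ of $M_P$, \[ V_{\mathcal{C}(\sigma C)}=V_{\sigma C}\subseteq V_{M_P}\quad\text{in }\mathbb{C}^{27}, \] where $\sigma C$ is the matroid whose dependent sets are $\sigma(S)$ for $S$ dependent in $C$.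
   Context: A point-line configuration is a simple matroid of rank $\le3$; its lines are the maximal subsets of size $\ge3$ and rank $2$. An automorphism of $M_P$ is a permutation $\sigma$ of $[9]$ such that $S$ is dependent in $M_P$ iff $\sigma(S)$ is. For a matroid $K$ on $[d]$ of rank $\le3$: a realization is $\gamma\in(\mathbb{C}^3)^d$ such that for all $S\subseteq[d]$, $(\gamma_s)_{s\in S}$ is linearly dependent iff $S$ is dependent in $K$; $V_K$ is the Zariski closure in $\mathbb{C}^{3d}$ of the set of realizations; the circuit variety $V_{\mathcal{C}(K)}$ is the set of $\gamma\in(\mathbb{C}^3)^d$ such that $(\gamma_s)_{s\in S}$ is linearly dependent for every dependent set $S$ of $K$. *)

theory Defs
  imports "HOL-Analysis.Analysis"
begin

text \<open>Configurations of d points in C^3 are elements of the extensional function space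
  {1..d} ->E UNIV, identified with C^(3d).\<close>

type_synonym config = "nat \<Rightarrow> complex^3"

definition ambient :: "nat \<Rightarrow> config set" where
  "ambient d = ({1..d} \<rightarrow>\<^sub>E (UNIV :: (complex^3) set))"

definition fam_dependent :: "config \<Rightarrow> nat set \<Rightarrow> bool" where
  "fam_dependent \<gamma> S \<longleftrightarrow>
     (\<exists>c :: nat \<Rightarrow> complex. (\<exists>s\<in>S. c s \<noteq> 0) \<and> (\<Sum>s\<in>S. c s *s \<gamma> s) = 0)"

inductive_set poly_funs :: "nat \<Rightarrow> (config \<Rightarrow> complex) set" for d :: nat where
  pconst: "(\<lambda>_. c) \<in> poly_funs d"
| pvar: "i \<in> {1..d} \<Longrightarrow> (\<lambda>\<gamma>. \<gamma> i $ j) \<in> poly_funs d"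
| padd: "p \<in> poly_funs d \<Longrightarrow> q \<in> poly_funs d \<Longrightarrow> (\<lambda>\<gamma>. p \<gamma> + q \<gamma>) \<in> poly_funs d"
| pmult: "p \<in> poly_funs d \<Longrightarrow> q \<in> poly_funs d \<Longrightarrow> (\<lambda>\<gamma>. p \<gamma> * q \<gamma>) \<in> poly_funs d"

definition zariski_closure :: "nat \<Rightarrow> config set \<Rightarrow> config set" where
  "zariski_closure d X = {x \<in> ambient d. \<forall>p\<in>poly_funs d. (\<forall>y\<in>X. p y = 0) \<longrightarrow> p x = 0}"

text \<open>A matroid K on [d] is given by its predicate of dependent sets (on subsets of [d]).\<close>
definition realizations :: "nat \<Rightarrow> (nat set \<Rightarrow> bool) \<Rightarrow> config set" where
  "realizations d K = {\<gamma> \<in> ambient d. \<forall>S\<subseteq>{1..d}. fam_dependent \<gamma> S \<longleftrightarrow> K S}"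

definition matroid_variety :: "nat \<Rightarrow> (nat set \<Rightarrow> bool) \<Rightarrow> config set" where
  "matroid_variety d K = zariski_closure d (realizations d K)"

definition circuit_variety :: "nat \<Rightarrow> (nat set \<Rightarrow> bool) \<Rightarrow> config set" where
  "circuit_variety d K = {\<gamma> \<in> ambient d. \<forall>S\<subseteq>{1..d}. K S \<longrightarrow> fam_dependent \<gamma> S}"

definition plc_rank :: "'a set set \<Rightarrow> 'a set \<Rightarrow> nat" where
  "plc_rank L T = (if card T \<le> 2 then card T else if (\<exists>l\<in>L. T \<subseteq> l) then 2 else 3)"

definition pappus_lines :: "nat set set" where
  "pappus_lines = {{1,2,3},{1,6,8},{7,8,9},{2,6,9},{2,4,7},{3,5,9},{3,4,8},{1,5,7},{4,5,6}}"

definition MP_dep :: "nat set \<Rightarrow> bool" where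
  "MP_dep S \<longleftrightarrow> S \<subseteq> {1..9} \<and> plc_rank pappus_lines S < card S"

text \<open>Quotient map: classes A={1,3}, B={4,6}, C'={7,9} represented by 1,4,7.\<close>
definition quot_map :: "nat \<Rightarrow> nat" where
  "quot_map i = (if i = 3 then 1 else if i = 6 then 4 else if i = 9 then 7 else i)"

definition P_lines :: "nat set set" where
  "P_lines = {{1,4,8},{4,2,7},{7,5,1}}"

definition C_rank :: "nat set \<Rightarrow> nat" where
  "C_rank S = plc_rank P_lines (quot_map ` S)"

definition C_dep :: "nat set \<Rightarrow> bool" where
  "C_dep S \<longleftrightarrow> S \<subseteq> {1..9} \<and> C_rank S < card S"

definition automorphism_MP :: "(nat \<Rightarrow> nat) \<Rightarrow> bool" where
  "automorphism_MP \<sigma> \<longleftrightarrow> bij_betw \<sigma> {1..9} {1..9} \<and>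
     (\<forall>S\<subseteq>{1..9}. MP_dep S \<longleftrightarrow> MP_dep (\<sigma> ` S))"

definition perm_dep :: "(nat \<Rightarrow> nat) \<Rightarrow> (nat set \<Rightarrow> bool) \<Rightarrow> nat set \<Rightarrow> bool" where
  "perm_dep \<sigma> K T \<longleftrightarrow> (\<exists>S. K S \<and> T = \<sigma> ` S)"

end

theory Submission
  imports Defs "HOL-Computational_Algebra.Polynomial"
begin

text \<open>
  For \<open>s = 0\<close> the Pappus configurations \<open>pappus_point m s\<close> degenerate: the points \<open>3, 6, 9\<close>
  fall onto \<open>1, 4, 7\<close>, and every realization of \<open>C\<close> is a projective image of such a
  degenerate configuration. So the realizations of \<open>C\<close> are limits of realizations of \<open>M\<^sub>P\<close>.

  A point of the circuit variety of \<open>C\<close> is, after choosing a representative for each of the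
  classes \<open>A, B, C'\<close>, a rescaled lift of a configuration of the triangle \<open>P\<close>: three vertices and
  a point on each side. Explicit polynomial curves deform such a configuration, through ones with
  pairwise distinct and then with independent vertices, into generic realizations of \<open>P\<close>; the
  rotation of the triangle reduces the degenerate cases to a single one. A curve that lies in a
  set off the finitely many zeros of a nonzero polynomial lies in its Zariski closure.

  Relabelling the coordinates by \<open>\<sigma>\<close> transports everything to \<open>\<sigma> C\<close>, and leaves \<open>M\<^sub>P\<close>
  unchanged because \<open>\<sigma>\<close> is an automorphism.
\<close>

section \<open>Polynomial curves and the Zariski closure\<close>

definition is_polynomial :: "(complex \<Rightarrow> complex) \<Rightarrow> bool" where
  "is_polynomial f \<longleftrightarrow> (\<exists>p. \<forall>t. f t = poly p t)"

lemma is_polynomial_const [intro]: "is_polynomial (\<lambda>t. c)"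
  unfolding is_polynomial_def by (rule exI[of _ "[:c:]"]) simp

lemma is_polynomial_id [intro]: "is_polynomial (\<lambda>t. t)"
  unfolding is_polynomial_def by (rule exI[of _ "[:0, 1:]"]) simp

lemma is_polynomial_add [intro]:
  "is_polynomial f \<Longrightarrow> is_polynomial g \<Longrightarrow> is_polynomial (\<lambda>t. f t + g t)"
  unfolding is_polynomial_def by (metis poly_add)

lemma is_polynomial_diff [intro]:
  "is_polynomial f \<Longrightarrow> is_polynomial g \<Longrightarrow> is_polynomial (\<lambda>t. f t - g t)"
  unfolding is_polynomial_def by (metis poly_diff)

lemma is_polynomial_mult [intro]:
  "is_polynomial f \<Longrightarrow> is_polynomial g \<Longrightarrow> is_polynomial (\<lambda>t. f t * g t)"
  unfolding is_polynomial_def by (metis poly_mult)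

lemma is_polynomial_if [intro]:
  "is_polynomial f \<Longrightarrow> is_polynomial g \<Longrightarrow> is_polynomial (\<lambda>t. if b then f t else g t)"
  by (cases b) auto

lemma is_polynomial_prod:
  "finite A \<Longrightarrow> (\<And>a. a \<in> A \<Longrightarrow> is_polynomial (f a)) \<Longrightarrow> is_polynomial (\<lambda>t. \<Prod>a\<in>A. f a t)"
  by (induction A rule: finite_induct) auto

definition poly_path :: "(complex \<Rightarrow> complex^3) \<Rightarrow> bool" where
  "poly_path u \<longleftrightarrow> (\<forall>j. is_polynomial (\<lambda>t. u t $ j))"

lemma poly_path_const [intro]: "poly_path (\<lambda>t. v)"
  unfolding poly_path_def by auto

lemma poly_path_add [intro]: "poly_path u \<Longrightarrow> poly_path v \<Longrightarrow> poly_path (\<lambda>t. u t + v t)"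
  unfolding poly_path_def by auto

lemma poly_path_scale [intro]: "is_polynomial f \<Longrightarrow> poly_path u \<Longrightarrow> poly_path (\<lambda>t. f t *s u t)"
  unfolding poly_path_def by auto

lemma poly_path_vector [intro]:
  "is_polynomial f \<Longrightarrow> is_polynomial g \<Longrightarrow> is_polynomial h \<Longrightarrow>
    poly_path (\<lambda>t. vector [f t, g t, h t])"
  unfolding poly_path_def
proof
  fix j :: 3
  assume "is_polynomial f" "is_polynomial g" "is_polynomial h"
  then show "is_polynomial (\<lambda>t. vector [f t, g t, h t] $ j)"
    using exhaust_3[of j] by auto
qed

lemma poly_path_if [intro]:
  "poly_path u \<Longrightarrow> poly_path v \<Longrightarrow> poly_path (\<lambda>t. if b then u t else v t)"
  by (cases b) auto

lemmas poly_intros = is_polynomial_const is_polynomial_id is_polynomial_add is_polynomial_diff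
  is_polynomial_mult is_polynomial_if poly_path_const poly_path_add poly_path_scale
  poly_path_vector poly_path_if

lemma is_polynomial_poly_funs:
  assumes "p \<in> poly_funs d" and "\<And>i. i \<in> {1..d} \<Longrightarrow> poly_path (\<lambda>t. \<phi> t i)"
  shows "is_polynomial (\<lambda>t. p (\<phi> t))"
  using assms(1) by induction (use assms(2) in \<open>auto simp: poly_path_def\<close>)

lemma poly_funs_diff:
  assumes "p \<in> poly_funs d" "q \<in> poly_funs d"
  shows "(\<lambda>\<gamma>. p \<gamma> - q \<gamma>) \<in> poly_funs d"
proof -
  have "(\<lambda>\<gamma>. p \<gamma> + (\<lambda>_. -1) \<gamma> * q \<gamma>) \<in> poly_funs d"
    by (intro poly_funs.padd poly_funs.pmult poly_funs.pconst assms)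
  then show ?thesis by simp
qed

lemmas poly_funs_intros = poly_funs.intros poly_funs_diff

lemma poly_funs_comp:
  assumes "p \<in> poly_funs d'" and "\<And>i j. i \<in> {1..d'} \<Longrightarrow> (\<lambda>x. F x i $ j) \<in> poly_funs d"
  shows "(\<lambda>x. p (F x)) \<in> poly_funs d"
  using assms(1) by induction (use assms(2) in \<open>auto intro: poly_funs.intros\<close>)

lemma zariski_closure_subset_ambient: "zariski_closure d X \<subseteq> ambient d"
  unfolding zariski_closure_def by auto

lemma subset_zariski_closure: "X \<subseteq> ambient d \<Longrightarrow> X \<subseteq> zariski_closure d X"
  unfolding zariski_closure_def by auto

lemma zariski_closure_minimal:
  "X \<subseteq> zariski_closure d Y \<Longrightarrow> zariski_closure d X \<subseteq> zariski_closure d Y"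
  unfolding zariski_closure_def by blast

lemma zariski_closure_vanishing:
  "x \<in> zariski_closure d Y \<Longrightarrow> p \<in> poly_funs d \<Longrightarrow> (\<And>y. y \<in> Y \<Longrightarrow> p y = 0) \<Longrightarrow> p x = 0"
  unfolding zariski_closure_def by blast

lemma zariski_closure_trans:
  "x \<in> zariski_closure d X \<Longrightarrow> X \<subseteq> zariski_closure d Y \<Longrightarrow> x \<in> zariski_closure d Y"
  using zariski_closure_minimal by blast

text \<open>A polynomial vanishing on \<open>Y\<close> restricts along the curve to a univariate polynomial
  \<open>P\<close> with \<open>P * g = 0\<close>, hence \<open>P = 0\<close>.\<close>

lemma zariski_closure_curve:
  assumes "\<And>t. \<phi> t \<in> ambient d" and "\<And>i. i \<in> {1..d} \<Longrightarrow> poly_path (\<lambda>t. \<phi> t i)"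
    and "is_polynomial g" "g s \<noteq> 0" and "\<And>t. g t \<noteq> 0 \<Longrightarrow> \<phi> t \<in> Y"
  shows "\<phi> t \<in> zariski_closure d Y"
  unfolding zariski_closure_def
proof (intro CollectI conjI ballI impI)
  show "\<phi> t \<in> ambient d" by fact
  fix p assume p: "p \<in> poly_funs d" and vanish: "\<forall>y\<in>Y. p y = 0"
  have "is_polynomial (\<lambda>t. p (\<phi> t))"
    by (rule is_polynomial_poly_funs[OF p]) (rule assms(2))
  then obtain P where P: "\<And>t. p (\<phi> t) = poly P t"
    unfolding is_polynomial_def by blast
  obtain G where G: "\<And>t. g t = poly G t"
    using assms(3) unfolding is_polynomial_def by blast
  have "\<forall>t. poly (P * G) t = 0"
    using vanish assms(5) P by (metis G mult_eq_0_iff poly_mult)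
  then have "P * G = 0" using poly_all_0_iff_0 by blast
  moreover have "G \<noteq> 0" using assms(4) G by auto
  ultimately show "p (\<phi> t) = 0" by (simp add: P)
qed

lemma zariski_closure_poly_map:
  assumes "\<And>x. x \<in> ambient d \<Longrightarrow> F x \<in> ambient d'"
    and "\<And>i j. i \<in> {1..d'} \<Longrightarrow> (\<lambda>x. F x i $ j) \<in> poly_funs d"
    and "\<And>x. x \<in> X \<Longrightarrow> F x \<in> Y" and "x \<in> zariski_closure d X"
  shows "F x \<in> zariski_closure d' Y"
  unfolding zariski_closure_def
proof (intro CollectI conjI ballI impI)
  show "F x \<in> ambient d'" using assms(1,4) zariski_closure_subset_ambient by blast
  fix p assume p: "p \<in> poly_funs d'" and vanish: "\<forall>y\<in>Y. p y = 0"
  have "(\<lambda>x. p (F x)) \<in> poly_funs d"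
    by (rule poly_funs_comp[OF p]) (rule assms(2))
  then show "p (F x) = 0"
    using zariski_closure_vanishing[OF assms(4)] vanish assms(3) by blast
qed

lemma ambient_eqI:
  "f \<in> ambient d \<Longrightarrow> g \<in> ambient d \<Longrightarrow> (\<And>i. i \<in> {1..d} \<Longrightarrow> f i = g i) \<Longrightarrow> f = g"
  unfolding ambient_def by (metis PiE_ext)

definition det3 :: "complex^3 \<Rightarrow> complex^3 \<Rightarrow> complex^3 \<Rightarrow> complex" where
  "det3 u v w = u$1 * (v$2 * w$3 - v$3 * w$2) - u$2 * (v$1 * w$3 - v$3 * w$1)
     + u$3 * (v$1 * w$2 - v$2 * w$1)"

definition cross :: "complex^3 \<Rightarrow> complex^3 \<Rightarrow> complex^3" where
  "cross u v = vector [u$2 * v$3 - u$3 * v$2, u$3 * v$1 - u$1 * v$3, u$1 * v$2 - u$2 * v$1]"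

lemma vec3_eq_iff: "(x::complex^3) = y \<longleftrightarrow> x$1 = y$1 \<and> x$2 = y$2 \<and> x$3 = y$3"
  by (simp add: vec_eq_iff forall_3)

lemma vec3_eq_0_iff: "(x::complex^3) = 0 \<longleftrightarrow> x$1 = 0 \<and> x$2 = 0 \<and> x$3 = 0"
  by (simp add: vec3_eq_iff)

lemma cross_nth [simp]:
  "cross u v $ 1 = u$2 * v$3 - u$3 * v$2" "cross u v $ 2 = u$3 * v$1 - u$1 * v$3"
  "cross u v $ 3 = u$1 * v$2 - u$2 * v$1"
  by (simp_all add: cross_def)

lemma cross_eq_0_iff:
  "cross u v = 0 \<longleftrightarrow> u$2 * v$3 = u$3 * v$2 \<and> u$3 * v$1 = u$1 * v$3 \<and> u$1 * v$2 = u$2 * v$1"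
  by (simp add: vec3_eq_0_iff)

lemma cross_commute_eq_0: "cross v u = 0 \<longleftrightarrow> cross u v = 0"
  unfolding cross_eq_0_iff by (auto simp: mult.commute)

lemma cross_scale_left: "cross (k *s u) v = k *s cross u v"
  and cross_scale_right: "cross u (k *s v) = k *s cross u v"
  by (simp_all add: vec3_eq_iff algebra_simps)

lemma det3_0 [simp]: "det3 0 v w = 0" "det3 u 0 w = 0" "det3 u v 0 = 0"
  by (simp_all add: det3_def)

lemma det3_cyclic: "det3 u v w = det3 v w u"
  and det3_swap: "det3 u v w = - det3 v u w"
  by (simp_all add: det3_def algebra_simps)

lemma det3_combination:
  "det3 (a *s u + b *s v + c *s w) v w = a * det3 u v w"
  "det3 u (a *s u + b *s v + c *s w) w = b * det3 u v w"
  "det3 u v (a *s u + b *s v + c *s w) = c * det3 u v w"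
  by (simp_all add: det3_def algebra_simps)

lemma det3_scale: "det3 (a *s u) (b *s v) (c *s w) = a * b * c * det3 u v w"
  by (simp add: det3_def algebra_simps)

lemma det3_unit_vectors:
  "det3 u v (vector [1, 0, 0]) = cross u v $ 1" "det3 u v (vector [0, 1, 0]) = cross u v $ 2"
  "det3 u v (vector [0, 0, 1]) = cross u v $ 3"
  by (simp_all add: det3_def algebra_simps)

lemma det3_eq_0_if_cross_eq_0:
  assumes "cross u v = 0"
  shows "det3 u v w = 0"
proof -
  have "det3 u v w = w$1 * cross u v $ 1 + w$2 * cross u v $ 2 + w$3 * cross u v $ 3"
    by (simp add: det3_def algebra_simps)
  with assms show ?thesis by simp
qed

text \<open>Expanding the vanishing \<open>4 \<times> 4\<close> determinant with two equal rows.\<close>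

lemma det3_four_vectors:
  "det3 v w z *s u - det3 u w z *s v + det3 u v z *s w - det3 u v w *s z = 0"
  by (simp add: vec3_eq_0_iff det3_def algebra_simps)

lemma det3_cramer:
  assumes "det3 P Q R \<noteq> 0"
  shows "v = (det3 v Q R / det3 P Q R) *s P + (det3 P v R / det3 P Q R) *s Q
           + (det3 P Q v / det3 P Q R) *s R"
proof -
  let ?D = "det3 P Q R"
  have "?D *s v = det3 v Q R *s P + det3 P v R *s Q + det3 P Q v *s R"
    by (simp add: vec3_eq_iff det3_def algebra_simps)
  then have "(1 / ?D) *s (?D *s v) = (det3 v Q R / ?D) *s P + (det3 P v R / ?D) *s Q
      + (det3 P Q v / ?D) *s R"
    by (simp add: vector_add_ldistrib)
  with assms show ?thesis by simp
qed

lemma cross_eq_0_imp_parallel: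
  assumes "u \<noteq> 0" "cross u v = 0"
  shows "\<exists>k. v = k *s u"
proof -
  have e: "u$2 * v$3 = u$3 * v$2" "u$3 * v$1 = u$1 * v$3" "u$1 * v$2 = u$2 * v$1"
    using assms(2) by (simp_all add: cross_eq_0_iff)
  consider "u$1 \<noteq> 0" | "u$2 \<noteq> 0" | "u$3 \<noteq> 0" using assms(1) by (auto simp: vec3_eq_0_iff)
  then show ?thesis
  proof cases
    case 1 then show ?thesis using e by (intro exI[of _ "v$1 / u$1"]) (auto simp: vec3_eq_iff field_simps)
  next
    case 2 then show ?thesis using e by (intro exI[of _ "v$2 / u$2"]) (auto simp: vec3_eq_iff field_simps)
  next
    case 3 then show ?thesis using e by (intro exI[of _ "v$3 / u$3"]) (auto simp: vec3_eq_iff field_simps)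
  qed
qed

lemma cross_eq_0_imp_parallel_nonzero:
  assumes "u \<noteq> 0" "v \<noteq> 0" "cross u v = 0"
  obtains k where "k \<noteq> 0" "v = k *s u"
  using cross_eq_0_imp_parallel[OF assms(1,3)] assms(2) by force

lemma cross_nonzero_imp_det3_nonzero: "cross u v \<noteq> 0 \<Longrightarrow> \<exists>z. det3 u v z \<noteq> 0"
  using det3_unit_vectors[of u v] by (metis vec3_eq_0_iff)

lemma det3_eq_0_imp_in_span:
  assumes "cross u v \<noteq> 0" "det3 p u v = 0"
  shows "\<exists>\<beta> \<gamma>. p = \<beta> *s u + \<gamma> *s v"
proof -
  obtain z where z: "det3 u v z \<noteq> 0" using cross_nonzero_imp_det3_nonzero[OF assms(1)] by blast
  have "det3 u v p = 0" using assms(2) det3_cyclic[of p u v] by simp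
  then have "p = (det3 p v z / det3 u v z) *s u + (det3 u p z / det3 u v z) *s v"
    using det3_cramer[OF z, of p] by simp
  then show ?thesis by blast
qed

lemma nonzero_imp_det3_nonzero:
  assumes "(a::complex^3) \<noteq> 0"
  shows "\<exists>e f. det3 a e f \<noteq> 0"
proof -
  consider "a$1 \<noteq> 0" | "a$2 \<noteq> 0" | "a$3 \<noteq> 0" using assms by (auto simp: vec3_eq_0_iff)
  then show ?thesis
  proof cases
    case 1 then show ?thesis
      by (intro exI[of _ "vector [0, 1, 0]"] exI[of _ "vector [0, 0, 1]"]) (simp add: det3_def)
  next
    case 2 then show ?thesis
      by (intro exI[of _ "vector [1, 0, 0]"] exI[of _ "vector [0, 0, 1]"]) (simp add: det3_def)
  next
    case 3 then show ?thesis
      by (intro exI[of _ "vector [1, 0, 0]"] exI[of _ "vector [0, 1, 0]"]) (simp add: det3_def)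
  qed
qed

lemma is_polynomial_det3 [intro]:
  "poly_path u \<Longrightarrow> poly_path v \<Longrightarrow> poly_path w \<Longrightarrow> is_polynomial (\<lambda>t. det3 (u t) (v t) (w t))"
  unfolding det3_def poly_path_def by (intro is_polynomial_add is_polynomial_diff is_polynomial_mult) auto

lemma poly_funs_det3:
  "i \<in> {1..d} \<Longrightarrow> j \<in> {1..d} \<Longrightarrow> k \<in> {1..d} \<Longrightarrow> (\<lambda>\<gamma>. det3 (\<gamma> i) (\<gamma> j) (\<gamma> k)) \<in> poly_funs d"
  unfolding det3_def by (intro poly_funs_intros)

lemma poly_funs_cross:
  assumes "i \<in> {1..d}" "j \<in> {1..d}"
  shows "(\<lambda>\<gamma>. cross (\<gamma> i) (\<gamma> j) $ l) \<in> poly_funs d"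
proof -
  have "\<forall>l. (\<lambda>\<gamma>. cross (\<gamma> i) (\<gamma> j) $ l) \<in> poly_funs d"
    unfolding forall_3 cross_nth using assms by (intro conjI poly_funs_intros)
  then show ?thesis by blast
qed

section \<open>Linear dependence and realizations\<close>

lemma fam_dependent_empty [simp]: "\<not> fam_dependent \<gamma> {}"
  by (simp add: fam_dependent_def)

lemma fam_dependent_singleton: "fam_dependent \<gamma> {i} \<longleftrightarrow> \<gamma> i = 0"
proof
  assume "fam_dependent \<gamma> {i}"
  then obtain c where "c i \<noteq> 0" "c i *s \<gamma> i = 0" by (auto simp: fam_dependent_def)
  then show "\<gamma> i = 0" by (simp add: vec_eq_iff)
qed (auto simp: fam_dependent_def intro: exI[of _ "\<lambda>_. 1"])

lemma fam_dependent_cong: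
  "(\<And>i. i \<in> S \<Longrightarrow> \<gamma> i = \<gamma>' i) \<Longrightarrow> fam_dependent \<gamma> S \<longleftrightarrow> fam_dependent \<gamma>' S"
  unfolding fam_dependent_def by (metis (no_types, lifting) sum.cong)

lemma fam_dependent_mono:
  assumes "finite T" "S \<subseteq> T" "fam_dependent \<gamma> S"
  shows "fam_dependent \<gamma> T"
proof -
  obtain c where c: "\<exists>s\<in>S. c s \<noteq> 0" "(\<Sum>s\<in>S. c s *s \<gamma> s) = 0"
    using assms(3) by (auto simp: fam_dependent_def)
  define c' where "c' s = (if s \<in> S then c s else 0)" for s
  have "(\<Sum>s\<in>T. c' s *s \<gamma> s) = (\<Sum>s\<in>S. c s *s \<gamma> s)"
    using sum.mono_neutral_right[OF assms(1,2), of "\<lambda>s. c' s *s \<gamma> s"]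
    by (simp add: c'_def)
  then show ?thesis unfolding fam_dependent_def using c assms(2)
    by (intro exI[of _ c']) (auto simp: c'_def)
qed

lemma fam_dependent_pair:
  assumes "i \<noteq> j"
  shows "fam_dependent \<gamma> {i, j} \<longleftrightarrow> cross (\<gamma> i) (\<gamma> j) = 0"
proof
  assume "fam_dependent \<gamma> {i, j}"
  then obtain a b where ab: "a \<noteq> 0 \<or> b \<noteq> 0" "a *s \<gamma> i + b *s \<gamma> j = 0"
    using assms by (auto simp: fam_dependent_def)
  then have e: "a * \<gamma> i $ l + b * \<gamma> j $ l = 0" for l
    by (metis vector_add_component vector_smult_component zero_index)
  show "cross (\<gamma> i) (\<gamma> j) = 0"
  proof (cases "a = 0")
    case True
    with ab(1) e have "\<gamma> j $ l = 0" for l by simp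
    then show ?thesis by (simp add: cross_eq_0_iff)
  next
    case False
    with e have "\<gamma> i $ l = - (b / a) * \<gamma> j $ l" for l
      by (simp add: field_simps eq_neg_iff_add_eq_0)
    then show ?thesis by (simp add: cross_eq_0_iff algebra_simps)
  qed
next
  assume cross: "cross (\<gamma> i) (\<gamma> j) = 0"
  show "fam_dependent \<gamma> {i, j}"
  proof (cases "\<gamma> i = 0")
    case True
    then show ?thesis unfolding fam_dependent_def using assms
      by (intro exI[of _ "\<lambda>x. if x = i then 1 else 0"]) auto
  next
    case False
    then obtain k where "\<gamma> j = k *s \<gamma> i" using cross_eq_0_imp_parallel cross by blast
    then show ?thesis unfolding fam_dependent_def using assms
      by (intro exI[of _ "\<lambda>x. if x = i then k else -1"]) auto
  qed
qed

lemma exists_combination_if_det3_eq_0: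
  assumes "det3 u v w = 0"
  shows "\<exists>a b c. (a \<noteq> 0 \<or> b \<noteq> 0 \<or> c \<noteq> 0) \<and> a *s u + b *s v + c *s w = 0"
proof (cases "\<exists>z. det3 v w z \<noteq> 0 \<or> det3 u w z \<noteq> 0 \<or> det3 u v z \<noteq> 0")
  case True
  then obtain z where z: "det3 v w z \<noteq> 0 \<or> det3 u w z \<noteq> 0 \<or> det3 u v z \<noteq> 0" by blast
  have "det3 v w z *s u + (- det3 u w z) *s v + det3 u v z *s w = 0"
    using det3_four_vectors[of v w z u] assms by simp
  with z show ?thesis
    by (intro exI[of _ "det3 v w z"] exI[of _ "- det3 u w z"] exI[of _ "det3 u v z"]) auto
next
  case False
  then have "\<And>z. det3 u v z = 0" by blast
  then have "cross u v = 0"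
    using det3_unit_vectors[of u v] by (simp add: vec3_eq_0_iff)
  show ?thesis
  proof (cases "u = 0")
    case True then show ?thesis by (intro exI[of _ 1] exI[of _ 0]) simp
  next
    case False
    then obtain k where "v = k *s u" using cross_eq_0_imp_parallel \<open>cross u v = 0\<close> by blast
    then show ?thesis by (intro exI[of _ k] exI[of _ "-1"] exI[of _ 0]) simp
  qed
qed

lemma fam_dependent_triple:
  assumes "i \<noteq> j" "i \<noteq> k" "j \<noteq> k"
  shows "fam_dependent \<gamma> {i, j, k} \<longleftrightarrow> det3 (\<gamma> i) (\<gamma> j) (\<gamma> k) = 0"
proof
  assume "fam_dependent \<gamma> {i, j, k}"
  then obtain a b c where abc: "a \<noteq> 0 \<or> b \<noteq> 0 \<or> c \<noteq> 0"
      "a *s \<gamma> i + b *s \<gamma> j + c *s \<gamma> k = 0"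
    using assms by (auto simp: fam_dependent_def add.assoc)
  let ?x = "a *s \<gamma> i + b *s \<gamma> j + c *s \<gamma> k"
  have "det3 ?x (\<gamma> j) (\<gamma> k) = a * det3 (\<gamma> i) (\<gamma> j) (\<gamma> k)"
    "det3 (\<gamma> i) ?x (\<gamma> k) = b * det3 (\<gamma> i) (\<gamma> j) (\<gamma> k)"
    "det3 (\<gamma> i) (\<gamma> j) ?x = c * det3 (\<gamma> i) (\<gamma> j) (\<gamma> k)"
    by (rule det3_combination)+
  with abc show "det3 (\<gamma> i) (\<gamma> j) (\<gamma> k) = 0" by auto
next
  assume "det3 (\<gamma> i) (\<gamma> j) (\<gamma> k) = 0"
  then obtain a b c where abc: "a \<noteq> 0 \<or> b \<noteq> 0 \<or> c \<noteq> 0"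
      "a *s \<gamma> i + b *s \<gamma> j + c *s \<gamma> k = 0"
    using exists_combination_if_det3_eq_0 by blast
  show "fam_dependent \<gamma> {i, j, k}" unfolding fam_dependent_def
    using assms abc by (intro exI[of _ "\<lambda>x. if x = i then a else if x = j then b else c"])
      (auto simp: add.assoc)
qed

lemma fam_dependent_card_ge_4:
  assumes "finite S" "card S \<ge> 4"
  shows "fam_dependent \<gamma> S"
proof -
  obtain l where l: "l \<in> S" using assms by fastforce
  then have "card (S - {l}) \<ge> 3" using assms by (simp add: card_Diff_singleton)
  then obtain T where T: "T \<subseteq> S - {l}" "card T = 3" by (meson obtain_subset_with_card_n)
  then obtain i j k where ijk: "T = {i, j, k}" "i \<noteq> j" "j \<noteq> k" "i \<noteq> k"
    by (auto simp: card_3_iff)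
  with T l have ijkl: "{i, j, k, l} \<subseteq> S" "i \<noteq> j" "i \<noteq> k" "i \<noteq> l" "j \<noteq> k"
      "j \<noteq> l" "k \<noteq> l"
    by auto
  have "fam_dependent \<gamma> {i, j, k, l}"
  proof (cases "fam_dependent \<gamma> {i, j, k}")
    case True then show ?thesis by (rule fam_dependent_mono[rotated 2]) auto
  next
    case False
    let ?u = "\<gamma> i" and ?v = "\<gamma> j" and ?w = "\<gamma> k" and ?z = "\<gamma> l"
    have "det3 ?u ?v ?w \<noteq> 0" using False fam_dependent_triple ijkl by blast
    moreover have "det3 ?v ?w ?z *s ?u + (- det3 ?u ?w ?z) *s ?v
        + (det3 ?u ?v ?z *s ?w + (- det3 ?u ?v ?w) *s ?z) = 0"
      using det3_four_vectors[of ?v ?w ?z ?u] by (simp add: algebra_simps)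
    ultimately show ?thesis unfolding fam_dependent_def using ijkl
      by (intro exI[of _ "\<lambda>x. if x = i then det3 ?v ?w ?z else if x = j then - det3 ?u ?w ?z
          else if x = k then det3 ?u ?v ?z else - det3 ?u ?v ?w"]) (auto simp: algebra_simps)
  qed
  then show ?thesis using fam_dependent_mono[OF assms(1) ijkl(1)] by blast
qed

lemma fam_dependent_image:
  assumes "inj_on f S"
  shows "fam_dependent \<gamma> (f ` S) \<longleftrightarrow> fam_dependent (\<gamma> \<circ> f) S"
proof
  assume "fam_dependent \<gamma> (f ` S)"
  then obtain c where c: "\<exists>s\<in>f ` S. c s \<noteq> 0" "(\<Sum>s\<in>f ` S. c s *s \<gamma> s) = 0"
    unfolding fam_dependent_def by blast
  then show "fam_dependent (\<gamma> \<circ> f) S" unfolding fam_dependent_def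
    by (intro exI[of _ "c \<circ> f"]) (auto simp: sum.reindex[OF assms])
next
  assume "fam_dependent (\<gamma> \<circ> f) S"
  then obtain c where c: "\<exists>s\<in>S. c s \<noteq> 0" "(\<Sum>s\<in>S. c s *s \<gamma> (f s)) = 0"
    unfolding fam_dependent_def by auto
  define c' where "c' y = c (the_inv_into S f y)" for y
  have c': "c' (f s) = c s" if "s \<in> S" for s
    using the_inv_into_f_f[OF assms that] by (simp add: c'_def)
  have "(\<Sum>s\<in>f ` S. c' s *s \<gamma> s) = (\<Sum>s\<in>S. c s *s \<gamma> (f s))"
    by (simp add: sum.reindex[OF assms] c')
  then show "fam_dependent \<gamma> (f ` S)" unfolding fam_dependent_def using c c'
    by (intro exI[of _ c']) auto
qed

lemma fam_dependent_scale:
  assumes "\<And>i. i \<in> S \<Longrightarrow> k i \<noteq> 0"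
  shows "fam_dependent (\<lambda>i. k i *s v i) S \<longleftrightarrow> fam_dependent v S"
proof
  assume "fam_dependent (\<lambda>i. k i *s v i) S"
  then obtain c where "\<exists>s\<in>S. c s \<noteq> 0" "(\<Sum>s\<in>S. c s *s (k s *s v s)) = 0"
    unfolding fam_dependent_def by blast
  then show "fam_dependent v S" unfolding fam_dependent_def using assms
    by (intro exI[of _ "\<lambda>s. c s * k s"]) auto
next
  assume "fam_dependent v S"
  then obtain c where c: "\<exists>s\<in>S. c s \<noteq> 0" "(\<Sum>s\<in>S. c s *s v s) = 0"
    unfolding fam_dependent_def by blast
  have "(\<Sum>s\<in>S. (c s / k s) *s (k s *s v s)) = (\<Sum>s\<in>S. c s *s v s)"
    by (rule sum.cong) (auto simp: assms)
  then show "fam_dependent (\<lambda>i. k i *s v i) S" unfolding fam_dependent_def using assms c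
    by (intro exI[of _ "\<lambda>s. c s / k s"]) auto
qed

lemma fam_dependent_pullback:
  assumes "finite S" and "\<And>i. i \<in> S \<Longrightarrow> k i \<noteq> 0"
  shows "fam_dependent (\<lambda>i. k i *s w (q i)) S \<longleftrightarrow> \<not> inj_on q S \<or> fam_dependent w (q ` S)"
proof (cases "inj_on q S")
  case True
  then show ?thesis
    using fam_dependent_scale[of S k "w \<circ> q"] assms(2) fam_dependent_image[OF True]
    by (simp add: o_def)
next
  case False
  then obtain i j where ij: "i \<in> S" "j \<in> S" "i \<noteq> j" "q i = q j" unfolding inj_on_def by blast
  then have "fam_dependent (\<lambda>i. k i *s w (q i)) {i, j}"
    by (simp add: fam_dependent_pair cross_eq_0_iff)
  moreover have "{i, j} \<subseteq> S" using ij by auto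
  ultimately show ?thesis using False fam_dependent_mono[OF assms(1)] by blast
qed

lemma fam_dependent_zariski_closure:
  assumes x: "x \<in> zariski_closure d Y" and S: "S \<subseteq> {1..d}"
    and Y: "\<And>y. y \<in> Y \<Longrightarrow> fam_dependent y S"
  shows "fam_dependent x S"
proof -
  have fin: "finite S" using S finite_subset by blast
  consider "S = {}" | i where "S = {i}" | i j where "S = {i, j}" "i \<noteq> j"
    | i j k where "S = {i, j, k}" "i \<noteq> j" "i \<noteq> k" "j \<noteq> k" | "card S \<ge> 4"
  proof -
    consider "card S = 0" | "card S = 1" | "card S = 2" | "card S = 3" | "card S \<ge> 4"
      by linarith
    then show thesis
      by cases (use that fin in \<open>auto simp: card_1_singleton_iff card_2_iff card_3_iff\<close>)
  qed
  then show ?thesis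
  proof cases
    case 1
    then have "(\<lambda>_. 1::complex) x = 0"
      using zariski_closure_vanishing[OF x poly_funs.pconst] Y by force
    then show ?thesis by simp
  next
    case (2 i)
    have "x i $ l = 0" for l
    proof (rule zariski_closure_vanishing[OF x poly_funs.pvar])
      show "i \<in> {1..d}" using 2 S by auto
      fix y assume "y \<in> Y"
      then show "y i $ l = 0" using Y 2 fam_dependent_singleton by (metis zero_index)
    qed
    then show ?thesis using 2 by (simp add: fam_dependent_singleton vec_eq_iff)
  next
    case (3 i j)
    then have "cross (x i) (x j) $ l = 0" for l
      by (intro zariski_closure_vanishing[OF x poly_funs_cross])
        (use S Y fam_dependent_pair in auto)
    then show ?thesis using 3 by (simp add: fam_dependent_pair vec_eq_iff)
  next
    case (4 i j k)
    then have "det3 (x i) (x j) (x k) = 0"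
      by (intro zariski_closure_vanishing[OF x poly_funs_det3])
        (use S Y fam_dependent_triple in auto)
    then show ?thesis using 4 by (simp add: fam_dependent_triple)
  qed (use fin fam_dependent_card_ge_4 in blast)
qed

lemma circuit_variety_subset_ambient: "circuit_variety d K \<subseteq> ambient d"
  by (auto simp: circuit_variety_def)

lemma matroid_variety_subset_ambient: "matroid_variety d K \<subseteq> ambient d"
  using zariski_closure_subset_ambient by (simp add: matroid_variety_def)

lemma matroid_variety_subset_circuit_variety: "matroid_variety d K \<subseteq> circuit_variety d K"
  unfolding circuit_variety_def
proof (intro subsetI CollectI conjI allI impI)
  fix x S assume x: "x \<in> matroid_variety d K" and "S \<subseteq> {1..d}" "K S"
  then show "fam_dependent x S"
    using fam_dependent_zariski_closure[of x d "realizations d K" S]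
    unfolding matroid_variety_def realizations_def by blast
qed (use zariski_closure_subset_ambient in \<open>auto simp: matroid_variety_def\<close>)

lemma plc_rank_le_card: "finite T \<Longrightarrow> plc_rank L T \<le> card T"
  unfolding plc_rank_def by auto

lemma fam_dependent_iff_plc_rank:
  assumes "finite E"
    and triples: "\<And>T. T \<subseteq> E \<Longrightarrow> card T = 3 \<Longrightarrow> fam_dependent \<gamma> T \<longleftrightarrow> (\<exists>l\<in>L. T \<subseteq> l)"
    and small: "\<And>T. T \<subseteq> E \<Longrightarrow> card T \<le> 2 \<Longrightarrow>
      \<exists>T'. T \<subseteq> T' \<and> T' \<subseteq> E \<and> card T' = 3 \<and> \<not> (\<exists>l\<in>L. T' \<subseteq> l)"
    and "S \<subseteq> E"
  shows "fam_dependent \<gamma> S \<longleftrightarrow> plc_rank L S < card S"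
proof -
  have finS: "finite S" using assms(1,4) finite_subset by blast
  consider "card S \<le> 2" | "card S = 3" | "card S \<ge> 4" by linarith
  then show ?thesis
  proof cases
    case 1
    obtain T' where T': "S \<subseteq> T'" "T' \<subseteq> E" "card T' = 3" "\<not> (\<exists>l\<in>L. T' \<subseteq> l)"
      using small[OF assms(4) 1] by blast
    have "finite T'" using T'(3) card_ge_0_finite by force
    then have "\<not> fam_dependent \<gamma> S"
      using triples[OF T'(2,3)] T'(1,4) fam_dependent_mono[of T' S \<gamma>] by blast
    then show ?thesis using 1 by (simp add: plc_rank_def)
  qed (use triples[OF assms(4)] fam_dependent_card_ge_4[OF finS] in \<open>auto simp: plc_rank_def\<close>)
qed

definition reindex :: "nat \<Rightarrow> (nat \<Rightarrow> nat) \<Rightarrow> config \<Rightarrow> config" where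
  "reindex d \<pi> \<gamma> = restrict (\<gamma> \<circ> \<pi>) {1..d}"

lemma reindex_in_ambient [simp]: "reindex d \<pi> \<gamma> \<in> ambient d"
  by (auto simp: reindex_def ambient_def)

lemma fam_dependent_reindex:
  assumes "S \<subseteq> {1..d}" "inj_on \<pi> S"
  shows "fam_dependent (reindex d \<pi> \<gamma>) S \<longleftrightarrow> fam_dependent \<gamma> (\<pi> ` S)"
proof -
  have "fam_dependent (reindex d \<pi> \<gamma>) S \<longleftrightarrow> fam_dependent (\<gamma> \<circ> \<pi>) S"
    by (rule fam_dependent_cong) (use assms(1) in \<open>auto simp: reindex_def\<close>)
  also have "\<dots> \<longleftrightarrow> fam_dependent \<gamma> (\<pi> ` S)" using fam_dependent_image[OF assms(2)] by simp
  finally show ?thesis .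
qed

lemma zariski_closure_reindex:
  assumes "\<pi> ` {1..d} \<subseteq> {1..d}" and "\<And>y. y \<in> X \<Longrightarrow> reindex d \<pi> y \<in> Y"
    and "x \<in> zariski_closure d X"
  shows "reindex d \<pi> x \<in> zariski_closure d Y"
proof (rule zariski_closure_poly_map[where F = "reindex d \<pi>", OF _ _ assms(2,3)])
  show "(\<lambda>x. reindex d \<pi> x i $ j) \<in> poly_funs d" if "i \<in> {1..d}" for i j
    using assms(1) that by (auto simp: reindex_def image_subset_iff intro!: poly_funs.pvar)
qed simp

lemma reindex_reindex:
  assumes "\<gamma> \<in> ambient d" and "\<And>i. i \<in> {1..d} \<Longrightarrow> \<pi> i \<in> {1..d} \<and> \<rho> (\<pi> i) = i"
  shows "reindex d \<pi> (reindex d \<rho> \<gamma>) = \<gamma>"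
  by (rule ambient_eqI[OF reindex_in_ambient assms(1)]) (use assms(2) in \<open>auto simp: reindex_def\<close>)

definition frame_map :: "complex^3 \<Rightarrow> complex^3 \<Rightarrow> complex^3 \<Rightarrow> complex^3 \<Rightarrow> complex^3" where
  "frame_map P Q R u = u$1 *s P + u$2 *s Q + u$3 *s R"

lemma frame_map_sum: "frame_map P Q R (\<Sum>s\<in>S. c s *s y s) = (\<Sum>s\<in>S. c s *s frame_map P Q R (y s))"
proof (induction S rule: infinite_finite_induct)
  case (insert x F)
  then show ?case by (simp add: frame_map_def vec3_eq_iff algebra_simps)
qed (simp_all add: frame_map_def)

lemma det3_frame_map:
  "det3 (frame_map P Q R u) (frame_map P Q R v) (frame_map P Q R w) = det3 u v w * det3 P Q R"
  by (simp add: frame_map_def det3_def algebra_simps)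

lemma frame_map_eq_0_iff:
  assumes "det3 P Q R \<noteq> 0"
  shows "frame_map P Q R u = 0 \<longleftrightarrow> u = 0"
proof
  assume "frame_map P Q R u = 0"
  then have "det3 (frame_map P Q R u) Q R = 0" "det3 P (frame_map P Q R u) R = 0"
    "det3 P Q (frame_map P Q R u) = 0"
    by simp_all
  then show "u = 0" using assms unfolding frame_map_def det3_combination by (simp add: vec3_eq_0_iff)
qed (simp add: frame_map_def)

lemma fam_dependent_frame_map:
  assumes "det3 P Q R \<noteq> 0"
  shows "fam_dependent (\<lambda>i. frame_map P Q R (y i)) S \<longleftrightarrow> fam_dependent y S"
proof -
  have "(\<Sum>s\<in>S. c s *s frame_map P Q R (y s)) = 0 \<longleftrightarrow> (\<Sum>s\<in>S. c s *s y s) = 0" for c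
    using frame_map_eq_0_iff[OF assms] by (simp add: frame_map_sum[symmetric])
  then show ?thesis unfolding fam_dependent_def by presburger
qed

definition projective_image ::
    "nat \<Rightarrow> (nat \<Rightarrow> complex) \<Rightarrow> complex^3 \<Rightarrow> complex^3 \<Rightarrow> complex^3 \<Rightarrow> config \<Rightarrow> config" where
  "projective_image d k P Q R y = restrict (\<lambda>i. k i *s frame_map P Q R (y i)) {1..d}"

lemma projective_image_in_realizations:
  assumes "det3 P Q R \<noteq> 0" "\<And>i. i \<in> {1..d} \<Longrightarrow> k i \<noteq> 0" "y \<in> realizations d K"
  shows "projective_image d k P Q R y \<in> realizations d K"
  unfolding realizations_def
proof (intro CollectI conjI allI impI)
  fix S assume S: "S \<subseteq> {1..d}"
  have "fam_dependent (projective_image d k P Q R y) S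
      \<longleftrightarrow> fam_dependent (\<lambda>i. k i *s frame_map P Q R (y i)) S"
    by (rule fam_dependent_cong) (use S in \<open>auto simp: projective_image_def\<close>)
  also have "\<dots> \<longleftrightarrow> fam_dependent (\<lambda>i. frame_map P Q R (y i)) S"
    by (rule fam_dependent_scale) (use S assms(2) in auto)
  also have "\<dots> \<longleftrightarrow> fam_dependent y S" by (rule fam_dependent_frame_map[OF assms(1)])
  also have "\<dots> \<longleftrightarrow> K S" using assms(3) S unfolding realizations_def by blast
  finally show "fam_dependent (projective_image d k P Q R y) S \<longleftrightarrow> K S" .
qed (auto simp: projective_image_def ambient_def)

lemma projective_image_in_matroid_variety:
  assumes "det3 P Q R \<noteq> 0" "\<And>i. i \<in> {1..d} \<Longrightarrow> k i \<noteq> 0" "y \<in> matroid_variety d K"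
  shows "projective_image d k P Q R y \<in> matroid_variety d K"
  unfolding matroid_variety_def
proof (rule zariski_closure_poly_map[where F = "projective_image d k P Q R"])
  show "y \<in> zariski_closure d (realizations d K)"
    using assms(3) by (simp add: matroid_variety_def)
  show "projective_image d k P Q R x \<in> realizations d K" if "x \<in> realizations d K" for x
    by (rule projective_image_in_realizations[OF assms(1,2) that])
  show "(\<lambda>y. projective_image d k P Q R y i $ j) \<in> poly_funs d" if "i \<in> {1..d}" for i j
  proof -
    have "(\<lambda>y. (\<lambda>_. k i) y * ((\<lambda>y. y i $ 1) y * (\<lambda>_. P$j) y + (\<lambda>y. y i $ 2) y * (\<lambda>_. Q$j) y
        + (\<lambda>y. y i $ 3) y * (\<lambda>_. R$j) y)) \<in> poly_funs d"
      using that by (intro poly_funs.intros)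
    then show ?thesis using that by (simp add: projective_image_def frame_map_def algebra_simps)
  qed
qed (auto simp: projective_image_def ambient_def)

section \<open>Generic realizations of point-line configurations\<close>

definition noncollinear_triples :: "nat set \<Rightarrow> nat set set \<Rightarrow> (nat \<times> nat \<times> nat) set" where
  "noncollinear_triples E L =
     {(i, j, k). i < j \<and> j < k \<and> {i, j, k} \<subseteq> E \<and> \<not> (\<exists>l\<in>L. {i, j, k} \<subseteq> l)}"

definition noncollinearity :: "nat set \<Rightarrow> nat set set \<Rightarrow> config \<Rightarrow> complex" where
  "noncollinearity E L \<gamma> = (\<Prod>(i, j, k)\<in>noncollinear_triples E L. det3 (\<gamma> i) (\<gamma> j) (\<gamma> k))"

lemma finite_noncollinear_triples: "finite E \<Longrightarrow> finite (noncollinear_triples E L)"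
  by (rule finite_subset[of _ "E \<times> E \<times> E"]) (auto simp: noncollinear_triples_def)

lemma noncollinearity_nonzero_iff:
  assumes "finite E"
  shows "noncollinearity E L \<gamma> \<noteq> 0 \<longleftrightarrow>
    (\<forall>i\<in>E. \<forall>j\<in>E. \<forall>k\<in>E. i < j \<longrightarrow> j < k \<longrightarrow> \<not> (\<exists>l\<in>L. {i, j, k} \<subseteq> l) \<longrightarrow>
      det3 (\<gamma> i) (\<gamma> j) (\<gamma> k) \<noteq> 0)"
  using finite_noncollinear_triples[OF assms, of L]
  by (auto simp: noncollinearity_def prod_zero_iff noncollinear_triples_def)

lemma noncollinearity_cong:
  "(\<And>i. i \<in> E \<Longrightarrow> \<gamma> i = \<gamma>' i) \<Longrightarrow> noncollinearity E L \<gamma> = noncollinearity E L \<gamma>'"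
  unfolding noncollinearity_def noncollinear_triples_def by (intro prod.cong) auto

lemma is_polynomial_noncollinearity:
  assumes "finite E" and "\<And>i. poly_path (\<lambda>t. \<phi> t i)"
  shows "is_polynomial (\<lambda>t. noncollinearity E L (\<phi> t))"
  unfolding noncollinearity_def
  by (rule is_polynomial_prod[OF finite_noncollinear_triples[OF assms(1)]]) (auto intro: assms(2))

lemma sorted_triple:
  assumes "card (T::nat set) = 3"
  obtains i j k where "T = {i, j, k}" "i < j" "j < k"
proof -
  obtain a b c where abc: "T = {a, b, c}" "a \<noteq> b" "b \<noteq> c" "a \<noteq> c"
    using assms by (auto simp: card_3_iff)
  consider "a < b" "b < c" | "a < c" "c < b" | "b < a" "a < c" | "b < c" "c < a"
    | "c < a" "a < b" | "c < b" "b < a"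
    using abc by linarith
  then show ?thesis
  proof cases
    case 1 then show ?thesis using that[of a b c] abc by blast
  next
    case 2 then show ?thesis using that[of a c b] abc by (auto simp: insert_commute)
  next
    case 3 then show ?thesis using that[of b a c] abc by (auto simp: insert_commute)
  next
    case 4 then show ?thesis using that[of b c a] abc by (auto simp: insert_commute)
  next
    case 5 then show ?thesis using that[of c a b] abc by (auto simp: insert_commute)
  next
    case 6 then show ?thesis using that[of c b a] abc by (auto simp: insert_commute)
  qed
qed

lemma small_set_in_noncollinear_triple:
  assumes "finite E" and "\<exists>i\<in>E. \<exists>j\<in>E. i \<noteq> j"
    and pairs: "\<forall>i\<in>E. \<forall>j\<in>E. i \<noteq> j \<longrightarrow> (\<exists>k\<in>E. k \<noteq> i \<and> k \<noteq> j \<and> \<not> (\<exists>l\<in>L. {i, j, k} \<subseteq> l))"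
    and T: "T \<subseteq> E" "card T \<le> 2"
  shows "\<exists>T'. T \<subseteq> T' \<and> T' \<subseteq> E \<and> card T' = 3 \<and> \<not> (\<exists>l\<in>L. T' \<subseteq> l)"
proof -
  have ext: "\<exists>T'. T \<subseteq> T' \<and> T' \<subseteq> E \<and> card T' = 3 \<and> \<not> (\<exists>l\<in>L. T' \<subseteq> l)"
    if ij: "i \<in> E" "j \<in> E" "i \<noteq> j" "T \<subseteq> {i, j}" for i j
  proof -
    obtain k where k: "k \<in> E" "k \<noteq> i" "k \<noteq> j" "\<not> (\<exists>l\<in>L. {i, j, k} \<subseteq> l)"
      using pairs ij(1-3) by blast
    have "card {i, j, k} = 3" using k(2,3) ij(3) by simp
    then show ?thesis using ij k by (intro exI[of _ "{i, j, k}"]) auto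
  qed
  have "finite T" using T(1) assms(1) finite_subset by blast
  consider "T = {}" | i where "T = {i}" | i j where "T = {i, j}" "i \<noteq> j"
  proof -
    consider "card T = 0" | "card T = 1" | "card T = 2" using T(2) by linarith
    then show thesis
      by cases (use that \<open>finite T\<close> in \<open>auto simp: card_1_singleton_iff card_2_iff\<close>)
  qed
  then show ?thesis
  proof cases
    case 1
    obtain i j where "i \<in> E" "j \<in> E" "i \<noteq> j" using assms(2) by blast
    then show ?thesis using ext[of i j] 1 by blast
  next
    case (2 i)
    then have "i \<in> E" using T by auto
    moreover obtain j where "j \<in> E" "j \<noteq> i" using assms(2) by blast
    ultimately show ?thesis using ext[of i j] 2 by auto
  next
    case (3 i j) then show ?thesis using ext[of i j] T by auto
  qed
qed

lemma fam_dependent_iff_plc_rank_generic: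
  assumes "finite E" and "\<exists>i\<in>E. \<exists>j\<in>E. i \<noteq> j"
    and "\<forall>i\<in>E. \<forall>j\<in>E. i \<noteq> j \<longrightarrow> (\<exists>k\<in>E. k \<noteq> i \<and> k \<noteq> j \<and> \<not> (\<exists>l\<in>L. {i, j, k} \<subseteq> l))"
    and lines: "\<And>l. l \<in> L \<Longrightarrow> card l = 3 \<and> fam_dependent \<gamma> l"
    and "noncollinearity E L \<gamma> \<noteq> 0" and "S \<subseteq> E"
  shows "fam_dependent \<gamma> S \<longleftrightarrow> plc_rank L S < card S"
proof (rule fam_dependent_iff_plc_rank[OF assms(1) _ small_set_in_noncollinear_triple[OF assms(1-3)]
      assms(6)])
  fix T assume T: "T \<subseteq> E" "card T = 3"
  obtain i j k where ijk: "T = {i, j, k}" "i < j" "j < k" using sorted_triple[OF T(2)] .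
  show "fam_dependent \<gamma> T \<longleftrightarrow> (\<exists>l\<in>L. T \<subseteq> l)"
  proof
    assume "\<exists>l\<in>L. T \<subseteq> l"
    then obtain l where "l \<in> L" "T \<subseteq> l" by blast
    moreover have "card l = 3" "fam_dependent \<gamma> l" using lines[OF \<open>l \<in> L\<close>] by auto
    moreover have "finite l" using \<open>card l = 3\<close> card_ge_0_finite by force
    ultimately have "T = l" using T(2) card_subset_eq[of l T] by simp
    then show "fam_dependent \<gamma> T" using \<open>fam_dependent \<gamma> l\<close> by simp
  next
    assume dep: "fam_dependent \<gamma> T"
    show "\<exists>l\<in>L. T \<subseteq> l"
    proof (rule ccontr)
      assume "\<not> (\<exists>l\<in>L. T \<subseteq> l)"
      with T(1) ijk have "det3 (\<gamma> i) (\<gamma> j) (\<gamma> k) \<noteq> 0"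
        using assms(5) unfolding noncollinearity_nonzero_iff[OF assms(1)] by simp
      then show False using dep ijk fam_dependent_triple[of i j k \<gamma>] by simp
    qed
  qed
qed

section \<open>The Pappus configuration and its degeneration to \<open>C\<close>\<close>

lemma one_to_nine: "{1..9::nat} = {1, 2, 3, 4, 5, 6, 7, 8, 9}"
  by auto

text \<open>For \<open>s = 0\<close> the points \<open>3, 6, 9\<close> become multiples of \<open>1, 4, 7\<close>: the configuration
  degenerates to one of type \<open>C\<close>.\<close>

definition pappus_point :: "complex \<Rightarrow> complex \<Rightarrow> nat \<Rightarrow> complex^3" where
  "pappus_point m s i =
     (if i = 1 then vector [1, 0, 0] else if i = 2 then vector [0, 1, 1]
      else if i = 3 then vector [1, s, s] else if i = 4 then vector [0, 1, 0]
      else if i = 5 then vector [m, 0, 1] else if i = 6 then vector [m * s, 1, s]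
      else if i = 7 then vector [0, 0, 1] else if i = 8 then vector [1, 1, s]
      else vector [m * s, m * s, m * s + s - 1])"

definition pappus_config :: "complex \<Rightarrow> complex \<Rightarrow> config" where
  "pappus_config m s = restrict (pappus_point m s) {1..9}"

lemma pappus_lines_dependent: "l \<in> pappus_lines \<Longrightarrow> card l = 3 \<and> fam_dependent (pappus_point m s) l"
  unfolding pappus_lines_def
  by (auto simp: fam_dependent_triple pappus_point_def det3_def algebra_simps)

lemma pappus_pairs_in_noncollinear_triples:
  "\<forall>i\<in>{1..9}. \<forall>j\<in>{1..9}. i \<noteq> j \<longrightarrow>
    (\<exists>k\<in>{1..9}. k \<noteq> i \<and> k \<noteq> j \<and> \<not> (\<exists>l\<in>pappus_lines. {i, j, k} \<subseteq> l))"
  unfolding one_to_nine pappus_lines_def by simp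

lemma noncollinearity_pappus_point_2_2:
  "noncollinearity {1..9} pappus_lines (pappus_point 2 2) \<noteq> 0"
proof -
  let ?v = "pappus_point 2 2"
  \<comment> \<open>The simplifier normalises \<open>1 :: nat\<close> to \<open>Suc 0\<close>.\<close>
  have v: "?v (Suc 0) = vector [1, 0, 0]" "?v 2 = vector [0, 1, 1]" "?v 3 = vector [1, 2, 2]"
    "?v 4 = vector [0, 1, 0]" "?v 5 = vector [2, 0, 1]" "?v 6 = vector [4, 1, 2]"
    "?v 7 = vector [0, 0, 1]" "?v 8 = vector [1, 1, 2]" "?v 9 = vector [4, 4, 5]"
    by (simp_all add: pappus_point_def)
  show ?thesis
    unfolding noncollinearity_nonzero_iff[OF finite_atLeastAtMost] unfolding one_to_nine
    apply (simp only: ball_simps(5,7))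
    apply simp
    apply (simp add: pappus_lines_def)
    by (simp add: v det3_def)
qed

lemma pappus_config_in_realizations:
  assumes "noncollinearity {1..9} pappus_lines (pappus_point m s) \<noteq> 0"
  shows "pappus_config m s \<in> realizations 9 MP_dep"
  unfolding realizations_def
proof (intro CollectI conjI allI impI)
  fix S assume S: "S \<subseteq> {1..9::nat}"
  have "\<exists>i\<in>{1..9::nat}. \<exists>j\<in>{1..9}. i \<noteq> j" by (rule bexI[of _ 1], rule bexI[of _ 2]) auto
  then have "fam_dependent (pappus_point m s) S \<longleftrightarrow> plc_rank pappus_lines S < card S"
    by (rule fam_dependent_iff_plc_rank_generic[OF finite_atLeastAtMost _
          pappus_pairs_in_noncollinear_triples pappus_lines_dependent assms S])
  moreover have "fam_dependent (pappus_config m s) S \<longleftrightarrow> fam_dependent (pappus_point m s) S"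
    by (rule fam_dependent_cong) (use S in \<open>auto simp: pappus_config_def\<close>)
  ultimately show "fam_dependent (pappus_config m s) S \<longleftrightarrow> MP_dep S"
    using S by (simp add: MP_dep_def)
qed (auto simp: pappus_config_def ambient_def)

lemma pappus_config_degenerate_in_matroid_variety:
  "pappus_config m 0 \<in> matroid_variety 9 MP_dep"
proof -
  let ?m = "\<lambda>t. m + t * (2 - m)" and ?s = "\<lambda>t::complex. 2 * t"
  have "pappus_config (?m 0) (?s 0) \<in> zariski_closure 9 (realizations 9 MP_dep)"
  proof (rule zariski_closure_curve[where \<phi> = "\<lambda>t. pappus_config (?m t) (?s t)"
      and g = "\<lambda>t. noncollinearity {1..9} pappus_lines (pappus_point (?m t) (?s t))" and s = 1])
    have "poly_path (\<lambda>t. pappus_point (?m t) (?s t) i)" for i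
      unfolding pappus_point_def by (intro poly_intros)
    then show "is_polynomial (\<lambda>t. noncollinearity {1..9} pappus_lines (pappus_point (?m t) (?s t)))"
      by (intro is_polynomial_noncollinearity) auto
    show "poly_path (\<lambda>t. pappus_config (?m t) (?s t) i)" if "i \<in> {1..9}" for i
      using that \<open>\<And>i. poly_path _\<close> by (simp add: pappus_config_def)
  qed (use noncollinearity_pappus_point_2_2 pappus_config_in_realizations in
      \<open>auto simp: pappus_config_def ambient_def\<close>)
  then show ?thesis by (simp add: matroid_variety_def)
qed

lemma C_dep_small:
  "\<not> C_dep {1}" "\<not> C_dep {3}" "\<not> C_dep {4}" "\<not> C_dep {6}" "\<not> C_dep {7}" "\<not> C_dep {9}"
  "C_dep {1, 3}" "C_dep {4, 6}" "C_dep {7, 9}"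
  "\<not> C_dep {1, 4, 7}" "C_dep {1, 4, 8}" "\<not> C_dep {8, 4, 7}" "\<not> C_dep {1, 8, 7}"
  "C_dep {2, 4, 7}" "\<not> C_dep {1, 2, 7}" "\<not> C_dep {1, 4, 2}"
  "C_dep {1, 5, 7}" "\<not> C_dep {1, 4, 5}"
  by (simp_all add: C_dep_def C_rank_def plc_rank_def quot_map_def P_lines_def)

lemma C_realization_coordinates:
  assumes x: "x \<in> realizations 9 C_dep"
  obtains l3 l6 l9 a8 b8 b2 c2 a5 c5 where
    "det3 (x 1) (x 4) (x 7) \<noteq> 0" "l3 \<noteq> 0" "l6 \<noteq> 0" "l9 \<noteq> 0"
    "a8 \<noteq> 0" "b8 \<noteq> 0" "b2 \<noteq> 0" "c2 \<noteq> 0" "c5 \<noteq> 0"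
    "x 3 = l3 *s x 1" "x 6 = l6 *s x 4" "x 9 = l9 *s x 7"
    "x 8 = a8 *s x 1 + b8 *s x 4" "x 2 = b2 *s x 4 + c2 *s x 7" "x 5 = a5 *s x 1 + c5 *s x 7"
proof -
  have dep: "fam_dependent x S \<longleftrightarrow> C_dep S" if "S \<subseteq> {1..9}" for S
    using x that unfolding realizations_def by blast
  have nonzero: "x i \<noteq> 0" if "\<not> C_dep {i}" "i \<in> {1..9}" for i
    using dep[of "{i}"] that by (simp add: fam_dependent_singleton)
  have parallel: "\<exists>l. l \<noteq> 0 \<and> x j = l *s x i"
    if "C_dep {i, j}" "\<not> C_dep {i}" "\<not> C_dep {j}" "i \<in> {1..9}" "j \<in> {1..9}" "i \<noteq> j" for i j
  proof -
    have "cross (x i) (x j) = 0" using dep[of "{i, j}"] that fam_dependent_pair[of i j x] by simp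
    moreover have "x i \<noteq> 0" "x j \<noteq> 0" using nonzero that by auto
    ultimately obtain l where "l \<noteq> 0" "x j = l *s x i"
      using cross_eq_0_imp_parallel_nonzero by blast
    then show ?thesis by blast
  qed
  have det: "det3 (x i) (x j) (x k) = 0 \<longleftrightarrow> C_dep {i, j, k}"
    if "i \<in> {1..9}" "j \<in> {1..9}" "k \<in> {1..9}" "i \<noteq> j" "i \<noteq> k" "j \<noteq> k" for i j k
  proof -
    have "{i, j, k} \<subseteq> {1..9}" using that(1-3) by simp
    then show ?thesis using dep fam_dependent_triple[OF that(4-6)] by blast
  qed
  define D where "D = det3 (x 1) (x 4) (x 7)"
  have D: "D \<noteq> 0" using det[of 1 4 7] C_dep_small by (simp add: D_def)
  have coords: "x p = (det3 (x p) (x 4) (x 7) / D) *s x 1 + (det3 (x 1) (x p) (x 7) / D) *s x 4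
      + (det3 (x 1) (x 4) (x p) / D) *s x 7" for p
    using det3_cramer[OF D[unfolded D_def]] by (simp add: D_def)
  obtain l3 l6 l9 where l: "l3 \<noteq> 0" "l6 \<noteq> 0" "l9 \<noteq> 0"
    "x 3 = l3 *s x 1" "x 6 = l6 *s x 4" "x 9 = l9 *s x 7"
    using parallel[of 1 3] parallel[of 4 6] parallel[of 7 9] C_dep_small by force
  have "det3 (x 1) (x 4) (x 8) = 0" "det3 (x 2) (x 4) (x 7) = 0" "det3 (x 1) (x 5) (x 7) = 0"
    using det[of 1 4 8] det[of 2 4 7] det[of 1 5 7] C_dep_small by simp_all
  then have eq: "x 8 = (det3 (x 8) (x 4) (x 7) / D) *s x 1 + (det3 (x 1) (x 8) (x 7) / D) *s x 4"
    "x 2 = (det3 (x 1) (x 2) (x 7) / D) *s x 4 + (det3 (x 1) (x 4) (x 2) / D) *s x 7"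
    "x 5 = (det3 (x 5) (x 4) (x 7) / D) *s x 1 + (det3 (x 1) (x 4) (x 5) / D) *s x 7"
    using coords[of 8] coords[of 2] coords[of 5] by simp_all
  have nz: "det3 (x 8) (x 4) (x 7) \<noteq> 0" "det3 (x 1) (x 8) (x 7) \<noteq> 0"
    "det3 (x 1) (x 2) (x 7) \<noteq> 0" "det3 (x 1) (x 4) (x 2) \<noteq> 0" "det3 (x 1) (x 4) (x 5) \<noteq> 0"
    using det[of 8 4 7] det[of 1 8 7] det[of 1 2 7] det[of 1 4 2] det[of 1 4 5] C_dep_small
    by simp_all
  show ?thesis
    by (rule that[OF D[unfolded D_def] l(1-3) _ _ _ _ _ l(4-6) eq]) (use nz D in simp_all)
qed

text \<open>The frame \<open>P, Q, R\<close> is adapted to the points \<open>8\<close> and \<open>2\<close>, and the parameter \<open>m\<close>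
  to the point \<open>5\<close>.\<close>

lemma C_realization_is_projective_image:
  assumes x: "x \<in> realizations 9 C_dep"
  obtains k P Q R m where "det3 P Q R \<noteq> 0" "\<And>i. i \<in> {1..9} \<Longrightarrow> k i \<noteq> 0"
    "x = projective_image 9 k P Q R (pappus_config m 0)"
proof -
  obtain l3 l6 l9 a8 b8 b2 c2 a5 c5 where nz:
    "det3 (x 1) (x 4) (x 7) \<noteq> 0" "l3 \<noteq> 0" "l6 \<noteq> 0" "l9 \<noteq> 0"
    "a8 \<noteq> 0" "b8 \<noteq> 0" "b2 \<noteq> 0" "c2 \<noteq> 0" "c5 \<noteq> 0"
    and eq: "x 3 = l3 *s x 1" "x 6 = l6 *s x 4" "x 9 = l9 *s x 7"
    "x 8 = a8 *s x 1 + b8 *s x 4" "x 2 = b2 *s x 4 + c2 *s x 7" "x 5 = a5 *s x 1 + c5 *s x 7"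
    by (rule C_realization_coordinates[OF x])
  define \<rho> where "\<rho> = b8 * c2 / b2"
  define P Q R where "P = a8 *s x 1" and "Q = b8 *s x 4" and "R = \<rho> *s x 7"
  define m where "m = a5 * b8 * c2 / (c5 * a8 * b2)"
  define k where "k i = (if i = 1 then 1 / a8 else if i = 2 then b2 / b8 else if i = 3 then l3 / a8
      else if i = 4 then 1 / b8 else if i = 5 then b2 * c5 / (b8 * c2) else if i = 6 then l6 / b8
      else if i = 7 then 1 / \<rho> else if i = 8 then 1 else - l9 / \<rho>)" for i :: nat
  have "\<rho> \<noteq> 0" using nz by (simp add: \<rho>_def)
  then have k: "k i \<noteq> 0" for i using nz by (simp add: k_def)
  have "det3 P Q R \<noteq> 0" using nz \<open>\<rho> \<noteq> 0\<close> by (simp add: P_def Q_def R_def det3_scale)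
  moreover have "x = projective_image 9 k P Q R (pappus_config m 0)"
  proof (rule ambient_eqI)
    show "x \<in> ambient 9" using x by (simp add: realizations_def)
    fix i :: nat assume "i \<in> {1..9}"
    then have "projective_image 9 k P Q R (pappus_config m 0) i
        = k i *s frame_map P Q R (pappus_point m 0 i)"
      by (simp add: projective_image_def pappus_config_def)
    moreover from \<open>i \<in> {1..9}\<close> have "x i = k i *s frame_map P Q R (pappus_point m 0 i)"
      unfolding one_to_nine
    proof (elim insertE emptyE)
      assume "i = 2" then show ?thesis using nz
        by (simp add: k_def frame_map_def pappus_point_def Q_def R_def eq \<rho>_def vec3_eq_iff field_simps)
    next
      assume "i = 5" then show ?thesis using nz
        by (simp add: k_def frame_map_def pappus_point_def P_def R_def eq \<rho>_def m_def vec3_eq_iff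
            field_simps)
    next
      assume "i = 9" then show ?thesis using \<open>\<rho> \<noteq> 0\<close>
        by (simp add: k_def frame_map_def pappus_point_def R_def eq vec3_eq_iff field_simps)
    qed (use nz \<open>\<rho> \<noteq> 0\<close> in \<open>simp_all add: k_def frame_map_def pappus_point_def P_def Q_def R_def eq\<close>)
    ultimately show "x i = projective_image 9 k P Q R (pappus_config m 0) i" by simp
  qed (auto simp: projective_image_def ambient_def)
  ultimately show ?thesis using that k by blast
qed

lemma realizations_C_subset_matroid_variety_MP:
  "realizations 9 C_dep \<subseteq> matroid_variety 9 MP_dep"
proof
  fix x assume "x \<in> realizations 9 C_dep"
  then show "x \<in> matroid_variety 9 MP_dep"
  proof (rule C_realization_is_projective_image)
    fix k P Q R m
    assume "det3 P Q R \<noteq> 0" "\<And>i. i \<in> {1..9} \<Longrightarrow> k i \<noteq> 0"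
      and "x = projective_image 9 k P Q R (pappus_config m 0)"
    then show ?thesis
      using projective_image_in_matroid_variety[OF _ _ pappus_config_degenerate_in_matroid_variety]
      by simp
  qed
qed

lemma matroid_variety_C_subset_matroid_variety_MP:
  "matroid_variety 9 C_dep \<subseteq> matroid_variety 9 MP_dep"
  using realizations_C_subset_matroid_variety_MP zariski_closure_minimal
  by (simp add: matroid_variety_def)

section \<open>Configurations of the triangle \<open>P\<close>\<close>

text \<open>Configurations of \<open>P\<close> live in \<open>\<complex>\<^sup>2\<^sup>4\<close>, indexed by the representatives \<open>1, 4, 7\<close> of
  the classes \<open>A, B, C'\<close> (the vertices of the triangle) and by the points \<open>8, 2, 5\<close> on its
  sides; the coordinates \<open>3\<close> and \<open>6\<close> play no role.\<close>

definition P_points :: "nat set" where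
  "P_points = {1, 2, 4, 5, 7, 8}"

definition P_collinear :: "config \<Rightarrow> bool" where
  "P_collinear w \<longleftrightarrow>
     det3 (w 1) (w 4) (w 8) = 0 \<and> det3 (w 2) (w 4) (w 7) = 0 \<and> det3 (w 1) (w 5) (w 7) = 0"

definition P_configs :: "config set" where
  "P_configs = {w \<in> ambient 8. P_collinear w}"

definition P_realizations :: "config set" where
  "P_realizations =
     {w \<in> ambient 8. \<forall>T\<subseteq>P_points. fam_dependent w T \<longleftrightarrow> plc_rank P_lines T < card T}"

definition indep_vertex_configs :: "config set" where
  "indep_vertex_configs = {w \<in> P_configs. det3 (w 1) (w 4) (w 7) \<noteq> 0}"

definition distinct_vertex_configs :: "config set" where
  "distinct_vertex_configs = {w \<in> P_configs.
     cross (w 1) (w 4) \<noteq> 0 \<and> cross (w 4) (w 7) \<noteq> 0 \<and> cross (w 1) (w 7) \<noteq> 0}"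

definition P_update ::
    "config \<Rightarrow> complex^3 \<Rightarrow> complex^3 \<Rightarrow> complex^3 \<Rightarrow> complex^3 \<Rightarrow> complex^3 \<Rightarrow> complex^3 \<Rightarrow> config"
  where
  "P_update w a b c p q r = restrict (\<lambda>i. if i = 1 then a else if i = 4 then b else if i = 7 then c
     else if i = 8 then p else if i = 2 then q else if i = 5 then r else w i) {1..8}"

lemma P_lines_eq: "P_lines = {{1, 4, 8}, {2, 4, 7}, {1, 5, 7}}"
  unfolding P_lines_def by (simp add: insert_commute)

lemma P_configs_iff:
  "w \<in> P_configs \<longleftrightarrow> w \<in> ambient 8 \<and>
     det3 (w 1) (w 4) (w 8) = 0 \<and> det3 (w 2) (w 4) (w 7) = 0 \<and> det3 (w 1) (w 5) (w 7) = 0"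
  by (simp add: P_configs_def P_collinear_def)

lemma P_update_in_ambient: "P_update w a b c p q r \<in> ambient 8"
  by (auto simp: P_update_def ambient_def)

lemma P_update_in_P_configs_iff:
  "P_update w a b c p q r \<in> P_configs \<longleftrightarrow>
     det3 a b p = 0 \<and> det3 q b c = 0 \<and> det3 a r c = 0"
  by (simp add: P_configs_iff P_update_in_ambient) (simp add: P_update_def)

lemma P_update_in_indep_vertex_configs:
  "P_update w a b c p q r \<in> P_configs \<Longrightarrow> det3 a b c \<noteq> 0 \<Longrightarrow>
    P_update w a b c p q r \<in> indep_vertex_configs"
  by (simp add: indep_vertex_configs_def) (simp add: P_update_def)

lemma P_update_in_distinct_vertex_configs:
  "P_update w a b c p q r \<in> P_configs \<Longrightarrow> cross a b \<noteq> 0 \<Longrightarrow> cross b c \<noteq> 0 \<Longrightarrow>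
    cross a c \<noteq> 0 \<Longrightarrow> P_update w a b c p q r \<in> distinct_vertex_configs"
  by (simp add: distinct_vertex_configs_def) (simp add: P_update_def)

lemma P_update_curve:
  assumes w: "w \<in> ambient 8"
    and paths: "poly_path a" "poly_path b" "poly_path c" "poly_path p" "poly_path q" "poly_path r"
    and start: "a 0 = w 1" "b 0 = w 4" "c 0 = w 7" "p 0 = w 8" "q 0 = w 2" "r 0 = w 5"
    and g: "is_polynomial g" "g 1 \<noteq> 0"
    and in_Y: "\<And>t. g t \<noteq> 0 \<Longrightarrow> P_update w (a t) (b t) (c t) (p t) (q t) (r t) \<in> Y"
  shows "w \<in> zariski_closure 8 Y"
proof -
  let ?\<phi> = "\<lambda>t. P_update w (a t) (b t) (c t) (p t) (q t) (r t)"
  have "?\<phi> 0 \<in> zariski_closure 8 Y"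
  proof (rule zariski_closure_curve[where \<phi> = ?\<phi>, OF P_update_in_ambient _ g in_Y])
    show "poly_path (\<lambda>t. ?\<phi> t i)" if "i \<in> {1..8}" for i
      unfolding P_update_def restrict_def by (intro poly_intros paths)
  qed
  moreover have "?\<phi> 0 = w"
    by (rule ambient_eqI[OF P_update_in_ambient w]) (auto simp: P_update_def start)
  ultimately show ?thesis by simp
qed

lemma P_pairs_in_noncollinear_triples:
  "\<forall>i\<in>P_points. \<forall>j\<in>P_points. i \<noteq> j \<longrightarrow>
    (\<exists>k\<in>P_points. k \<noteq> i \<and> k \<noteq> j \<and> \<not> (\<exists>l\<in>P_lines. {i, j, k} \<subseteq> l))"
  unfolding P_points_def P_lines_eq by simp

lemma P_configs_in_P_realizations:
  assumes "w \<in> P_configs" "noncollinearity P_points P_lines w \<noteq> 0"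
  shows "w \<in> P_realizations"
  unfolding P_realizations_def
proof (intro CollectI conjI allI impI)
  have lines: "card l = 3 \<and> fam_dependent w l" if "l \<in> P_lines" for l
    using that assms(1) by (auto simp: P_lines_eq P_configs_iff fam_dependent_triple)
  fix T assume "T \<subseteq> P_points"
  then show "fam_dependent w T \<longleftrightarrow> plc_rank P_lines T < card T"
    by (intro fam_dependent_iff_plc_rank_generic[OF _ _ P_pairs_in_noncollinear_triples lines
          assms(2)]) (auto simp: P_points_def)
qed (use assms(1) in \<open>simp add: P_configs_def\<close>)

definition standard_P_point :: "nat \<Rightarrow> complex^3" where
  "standard_P_point i = (if i = 1 then vector [1, 0, 0] else if i = 4 then vector [0, 1, 0]
     else if i = 7 then vector [0, 0, 1] else if i = 8 then vector [1, 2, 0]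
     else if i = 2 then vector [0, 1, 2] else vector [2, 0, 1])"

lemma finite_P_points [simp]: "finite P_points"
  by (simp add: P_points_def)

lemma noncollinearity_standard_P_point:
  assumes "det3 a b c \<noteq> 0"
  shows "noncollinearity P_points P_lines (\<lambda>i. frame_map a b c (standard_P_point i)) \<noteq> 0"
proof -
  have "\<forall>i\<in>P_points. \<forall>j\<in>P_points. \<forall>k\<in>P_points. i < j \<longrightarrow> j < k \<longrightarrow>
      \<not> (\<exists>l\<in>P_lines. {i, j, k} \<subseteq> l) \<longrightarrow>
      det3 (standard_P_point i) (standard_P_point j) (standard_P_point k) \<noteq> 0"
    unfolding P_points_def
    apply (simp only: ball_simps(5,7))
    apply simp
    apply (simp add: P_lines_eq)
    by (simp add: standard_P_point_def det3_def)
  then show ?thesis using assms by (simp add: noncollinearity_nonzero_iff det3_frame_map)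
qed

lemma indep_vertex_configs_subset_closure:
  "indep_vertex_configs \<subseteq> zariski_closure 8 P_realizations"
proof
  fix w assume "w \<in> indep_vertex_configs"
  then have w: "w \<in> ambient 8" and D: "det3 (w 1) (w 4) (w 7) \<noteq> 0"
    and lines: "det3 (w 1) (w 4) (w 8) = 0" "det3 (w 2) (w 4) (w 7) = 0" "det3 (w 1) (w 5) (w 7) = 0"
    by (auto simp: indep_vertex_configs_def P_configs_iff)
  let ?a = "w 1" and ?b = "w 4" and ?c = "w 7"
  let ?p8 = "\<lambda>t. w 8 + t *s (?a + 2 *s ?b - w 8)" and ?p2 = "\<lambda>t. w 2 + t *s (?b + 2 *s ?c - w 2)"
    and ?p5 = "\<lambda>t. w 5 + t *s (?c + 2 *s ?a - w 5)"
  let ?\<phi> = "\<lambda>t. P_update w ?a ?b ?c (?p8 t) (?p2 t) (?p5 t)"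
  \<comment> \<open>Straight lines keep each side point on its side and end at an image of the standard
    triangle.\<close>
  show "w \<in> zariski_closure 8 P_realizations"
  proof (rule P_update_curve[OF w, where a = "\<lambda>_. ?a" and b = "\<lambda>_. ?b" and c = "\<lambda>_. ?c"
        and p = ?p8 and q = ?p2 and r = ?p5 and g = "\<lambda>t. noncollinearity P_points P_lines (?\<phi> t)"])
    have "poly_path (\<lambda>t. ?\<phi> t i)" for i
      unfolding P_update_def restrict_def by (intro poly_intros)
    then show "is_polynomial (\<lambda>t. noncollinearity P_points P_lines (?\<phi> t))"
      by (intro is_polynomial_noncollinearity) (auto simp: P_points_def)
    have "?\<phi> 1 i = frame_map ?a ?b ?c (standard_P_point i)" if "i \<in> P_points" for i
      using that by (auto simp: P_points_def P_update_def frame_map_def standard_P_point_def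
          vec3_eq_iff)
    then have "noncollinearity P_points P_lines (?\<phi> 1)
        = noncollinearity P_points P_lines (\<lambda>i. frame_map ?a ?b ?c (standard_P_point i))"
      by (rule noncollinearity_cong)
    then show "noncollinearity P_points P_lines (?\<phi> 1) \<noteq> 0"
      using noncollinearity_standard_P_point[OF D] by simp
    fix t assume nc: "noncollinearity P_points P_lines (?\<phi> t) \<noteq> 0"
    have "det3 ?a ?b (?p8 t) = (1 - t) * det3 ?a ?b (w 8)"
      "det3 (?p2 t) ?b ?c = (1 - t) * det3 (w 2) ?b ?c"
      "det3 ?a (?p5 t) ?c = (1 - t) * det3 ?a (w 5) ?c"
      by (simp_all add: det3_def algebra_simps)
    with lines have "?\<phi> t \<in> P_configs" by (simp add: P_update_in_P_configs_iff)
    then show "?\<phi> t \<in> P_realizations" using nc by (rule P_configs_in_P_realizations)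
  qed (intro poly_intros | simp)+
qed

lemma distinct_vertex_configs_subset_closure:
  "distinct_vertex_configs \<subseteq> zariski_closure 8 indep_vertex_configs"
proof
  fix w assume "w \<in> distinct_vertex_configs"
  then have w: "w \<in> P_configs" and ab: "cross (w 1) (w 4) \<noteq> 0" and bc: "cross (w 4) (w 7) \<noteq> 0"
    and ac: "cross (w 1) (w 7) \<noteq> 0"
    by (auto simp: distinct_vertex_configs_def)
  let ?a = "w 1" and ?b = "w 4" and ?c = "w 7"
  have amb: "w \<in> ambient 8" and lines: "det3 ?a ?b (w 8) = 0" "det3 (w 2) ?b ?c = 0" "det3 ?a (w 5) ?c = 0"
    using w by (auto simp: P_configs_iff)
  show "w \<in> zariski_closure 8 indep_vertex_configs"
  proof (cases "det3 ?a ?b ?c = 0")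
    case False
    then have "w \<in> indep_vertex_configs" using w by (simp add: indep_vertex_configs_def)
    then show ?thesis using subset_zariski_closure[of indep_vertex_configs 8]
      by (auto simp: indep_vertex_configs_def P_configs_def)
  next
    case True
    obtain e where e: "det3 ?a ?b e \<noteq> 0" using cross_nonzero_imp_det3_nonzero[OF ab] by blast
    obtain \<beta> \<gamma> where p2: "w 2 = \<beta> *s ?b + \<gamma> *s ?c"
      using det3_eq_0_imp_in_span[OF bc] lines(2) by blast
    have "det3 (w 5) ?a ?c = 0" using lines(3) det3_swap[of "w 5" ?a ?c] by simp
    then obtain \<alpha> \<delta> where p5: "w 5 = \<alpha> *s ?a + \<delta> *s ?c"
      using det3_eq_0_imp_in_span[OF ac] by blast
    \<comment> \<open>Lift the third vertex off the line through the first two, carrying the points on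
      the sides through it along.\<close>
    let ?c' = "\<lambda>t. ?c + t *s e"
    show ?thesis
    proof (rule P_update_curve[OF amb, where a = "\<lambda>_. ?a" and b = "\<lambda>_. ?b" and c = ?c'
          and p = "\<lambda>_. w 8" and q = "\<lambda>t. \<beta> *s ?b + \<gamma> *s ?c' t"
          and r = "\<lambda>t. \<alpha> *s ?a + \<delta> *s ?c' t" and g = "\<lambda>t. t * det3 ?a ?b e"])
      fix t :: complex assume g: "t * det3 ?a ?b e \<noteq> 0"
      have "det3 ?a ?b (?c' t) = t * det3 ?a ?b e" using True by (simp add: det3_def algebra_simps)
      then show "P_update w ?a ?b (?c' t) (w 8) (\<beta> *s ?b + \<gamma> *s ?c' t) (\<alpha> *s ?a + \<delta> *s ?c' t)
          \<in> indep_vertex_configs"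
        using g lines(1) by (intro P_update_in_indep_vertex_configs)
          (simp_all add: P_update_in_P_configs_iff det3_def algebra_simps)
    qed (use e p2 p5 in \<open>(intro poly_intros | simp)+\<close>)
  qed
qed

lemma distinct_vertex_configs_subset_closure_P_realizations:
  "distinct_vertex_configs \<subseteq> zariski_closure 8 P_realizations"
  using distinct_vertex_configs_subset_closure indep_vertex_configs_subset_closure
    zariski_closure_minimal by blast

lemma parallel_vertices_in_closure_indep:
  assumes w: "w \<in> P_configs" and par: "cross (w 1) (w 4) = 0" and bc: "cross (w 4) (w 7) \<noteq> 0"
    and D: "det3 (w 1) (w 8) (w 7) \<noteq> 0"
  shows "w \<in> zariski_closure 8 indep_vertex_configs"
proof -
  let ?a = "w 1" and ?b = "w 4" and ?c = "w 7"
  have amb: "w \<in> ambient 8" and lines: "det3 ?a ?b (w 8) = 0" "det3 (w 2) ?b ?c = 0" "det3 ?a (w 5) ?c = 0"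
    using w by (auto simp: P_configs_iff)
  obtain \<beta> \<gamma> where p2: "w 2 = \<beta> *s ?b + \<gamma> *s ?c"
    using det3_eq_0_imp_in_span[OF bc] lines(2) by blast
  \<comment> \<open>Move the second vertex towards the point \<open>8\<close>, carrying the point \<open>2\<close> along.\<close>
  let ?b' = "\<lambda>t. ?b + t *s w 8"
  show ?thesis
  proof (rule P_update_curve[OF amb, where a = "\<lambda>_. ?a" and b = ?b' and c = "\<lambda>_. ?c"
        and p = "\<lambda>_. w 8" and q = "\<lambda>t. \<beta> *s ?b' t + \<gamma> *s ?c" and r = "\<lambda>_. w 5"
        and g = "\<lambda>t. t * det3 ?a (w 8) ?c"])
    fix t :: complex assume g: "t * det3 ?a (w 8) ?c \<noteq> 0"
    have "det3 ?a (?b' t) ?c = t * det3 ?a (w 8) ?c" "det3 ?a (?b' t) (w 8) = det3 ?a ?b (w 8)"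
      using det3_eq_0_if_cross_eq_0[OF par, of ?c] by (simp_all add: det3_def algebra_simps)
    with g lines show "P_update w ?a (?b' t) ?c (w 8) (\<beta> *s ?b' t + \<gamma> *s ?c) (w 5)
        \<in> indep_vertex_configs"
      by (intro P_update_in_indep_vertex_configs) (simp_all add: P_update_in_P_configs_iff,
          simp add: det3_def algebra_simps)
  qed (use D p2 in \<open>(intro poly_intros | simp)+\<close>)
qed

lemma parallel_vertices_in_closure_distinct:
  assumes w: "w \<in> P_configs" and par: "cross (w 1) (w 4) = 0"
    and ac: "cross (w 1) (w 7) \<noteq> 0" and bc: "cross (w 4) (w 7) \<noteq> 0"
    and D: "det3 (w 1) (w 8) (w 7) = 0"
  shows "w \<in> zariski_closure 8 distinct_vertex_configs"
proof -
  let ?a = "w 1" and ?b = "w 4" and ?c = "w 7"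
  have amb: "w \<in> ambient 8" and lines: "det3 ?a ?b (w 8) = 0" "det3 (w 2) ?b ?c = 0" "det3 ?a (w 5) ?c = 0"
    using w by (auto simp: P_configs_iff)
  \<comment> \<open>Move the second vertex towards the third: the vertices become pairwise distinct.\<close>
  let ?b' = "\<lambda>t. ?b + t *s ?c"
  show ?thesis
  proof (rule P_update_curve[OF amb, where a = "\<lambda>_. ?a" and b = ?b' and c = "\<lambda>_. ?c"
        and p = "\<lambda>_. w 8" and q = "\<lambda>_. w 2" and r = "\<lambda>_. w 5" and g = "\<lambda>t. t"])
    fix t :: complex assume "t \<noteq> 0"
    moreover have "cross ?a (?b' t) = t *s cross ?a ?c" "cross (?b' t) ?c = cross ?b ?c"
      using par by (simp_all add: vec3_eq_iff algebra_simps)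
    moreover have "det3 ?a (?b' t) (w 8) = det3 ?a ?b (w 8) - t * det3 ?a (w 8) ?c"
      "det3 (w 2) (?b' t) ?c = det3 (w 2) ?b ?c"
      by (simp_all add: det3_def algebra_simps)
    ultimately show "P_update w ?a (?b' t) ?c (w 8) (w 2) (w 5) \<in> distinct_vertex_configs"
      using D lines ac bc
      by (intro P_update_in_distinct_vertex_configs) (simp_all add: P_update_in_P_configs_iff)
  qed (intro poly_intros | simp)+
qed

lemma parallel_vertices_closure:
  assumes w: "w \<in> P_configs" and nonzero: "w 1 \<noteq> 0" "w 4 \<noteq> 0"
    and par: "cross (w 1) (w 4) = 0" and ac: "cross (w 1) (w 7) \<noteq> 0"
  shows "w \<in> zariski_closure 8 P_realizations"
proof -
  obtain k where "w 4 = k *s w 1" "k \<noteq> 0"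
    using cross_eq_0_imp_parallel_nonzero[OF nonzero par] by metis
  then have bc: "cross (w 4) (w 7) \<noteq> 0" using ac by (simp add: cross_scale_left)
  show ?thesis
  proof (cases "det3 (w 1) (w 8) (w 7) = 0")
    case True
    then show ?thesis
      using parallel_vertices_in_closure_distinct[OF w par ac bc]
        distinct_vertex_configs_subset_closure_P_realizations zariski_closure_trans by blast
  next
    case False
    then show ?thesis
      using parallel_vertices_in_closure_indep[OF w par bc] indep_vertex_configs_subset_closure
        zariski_closure_trans by blast
  qed
qed

definition collapsed_vertex_configs :: "config set" where
  "collapsed_vertex_configs = {w \<in> P_configs. w 1 \<noteq> 0 \<and> w 4 \<noteq> 0 \<and> w 7 \<noteq> 0 \<and>
     cross (w 1) (w 4) = 0 \<and> cross (w 1) (w 7) = 0 \<and>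
     det3 (w 1) (w 8) (w 5) \<noteq> 0 \<and> det3 (w 1) (w 2) (w 5) \<noteq> 0 \<and> det3 (w 1) (w 8) (w 2) \<noteq> 0}"

lemma collapsed_vertex_configs_subset_closure:
  "collapsed_vertex_configs \<subseteq> zariski_closure 8 indep_vertex_configs"
proof
  fix w assume "w \<in> collapsed_vertex_configs"
  then have amb: "w \<in> ambient 8" and nonzero: "w 1 \<noteq> 0" "w 4 \<noteq> 0" "w 7 \<noteq> 0"
    and par: "cross (w 1) (w 4) = 0" "cross (w 1) (w 7) = 0"
    and gen: "det3 (w 1) (w 8) (w 5) \<noteq> 0" "det3 (w 1) (w 2) (w 5) \<noteq> 0" "det3 (w 1) (w 8) (w 2) \<noteq> 0"
    by (auto simp: collapsed_vertex_configs_def P_configs_def)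
  let ?a = "w 1" and ?b = "w 4" and ?c = "w 7"
  obtain kb where kb: "?b = kb *s ?a" "kb \<noteq> 0"
    using cross_eq_0_imp_parallel_nonzero[OF nonzero(1,2) par(1)] by metis
  obtain kc where kc: "?c = kc *s ?a" "kc \<noteq> 0"
    using cross_eq_0_imp_parallel_nonzero[OF nonzero(1,3) par(2)] by metis
  define D where "D = det3 ?a (w 8) (w 5)"
  define \<alpha> \<beta> \<gamma> where "\<alpha> = det3 (w 2) (w 8) (w 5) / D" and "\<beta> = det3 ?a (w 2) (w 5) / D"
    and "\<gamma> = det3 ?a (w 8) (w 2) / D"
  have D: "D \<noteq> 0" using gen by (simp add: D_def)
  have p2: "w 2 = \<alpha> *s ?a + \<beta> *s w 8 + \<gamma> *s w 5"
    using det3_cramer[OF gen(1), of "w 2"] by (simp add: \<alpha>_def \<beta>_def \<gamma>_def D_def)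
  have "\<beta> \<noteq> 0" "\<gamma> \<noteq> 0" using gen D by (simp_all add: \<beta>_def \<gamma>_def)
  define x y where "x = kb * \<beta>" and "y = - kc * \<gamma>"
  have "x * y * D \<noteq> 0" using kb kc \<open>\<beta> \<noteq> 0\<close> \<open>\<gamma> \<noteq> 0\<close> D by (simp add: x_def y_def)
  \<comment> \<open>Separate the vertices along the lines towards \<open>8\<close> and \<open>5\<close>; the point \<open>2\<close> follows
    so as to stay on the line through the second and third vertex.\<close>
  let ?b' = "\<lambda>t. ?b + (t * x) *s w 8" and ?c' = "\<lambda>t. ?c + (t * y) *s w 5"
    and ?q = "\<lambda>t. w 2 + (t * \<beta> * \<alpha>) *s w 8"
  show "w \<in> zariski_closure 8 indep_vertex_configs"
  proof (rule P_update_curve[OF amb, where a = "\<lambda>_. ?a" and b = ?b' and c = ?c'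
        and p = "\<lambda>_. w 8" and q = ?q and r = "\<lambda>_. w 5" and g = "\<lambda>t. t * t * x * y * D"])
    fix t :: complex assume g: "t * t * x * y * D \<noteq> 0"
    have "det3 ?a (?b' t) (?c' t) = t * t * x * y * D"
      unfolding kb(1) kc(1) D_def by (simp add: det3_def algebra_simps)
    moreover have "det3 ?a (?b' t) (w 8) = 0" "det3 ?a (w 5) (?c' t) = 0"
      unfolding kb(1) kc(1) by (simp_all add: det3_def algebra_simps)
    moreover have "det3 (?q t) (?b' t) (?c' t) = 0"
      unfolding kb(1) kc(1) p2 x_def y_def by (simp add: det3_def algebra_simps)
    ultimately show "P_update w ?a (?b' t) (?c' t) (w 8) (?q t) (w 5) \<in> indep_vertex_configs"
      using g by (intro P_update_in_indep_vertex_configs) (simp_all add: P_update_in_P_configs_iff)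
  qed (use \<open>x * y * D \<noteq> 0\<close> in \<open>(intro poly_intros | simp)+\<close>)
qed

lemma all_parallel_vertices_in_closure_collapsed:
  assumes amb: "w \<in> ambient 8" and nonzero: "w 1 \<noteq> 0" "w 4 \<noteq> 0" "w 7 \<noteq> 0"
    and par: "cross (w 1) (w 4) = 0" "cross (w 1) (w 7) = 0"
  shows "w \<in> zariski_closure 8 collapsed_vertex_configs"
proof -
  let ?a = "w 1" and ?b = "w 4" and ?c = "w 7"
  obtain kb where kb: "?b = kb *s ?a" "kb \<noteq> 0"
    using cross_eq_0_imp_parallel_nonzero[OF nonzero(1,2) par(1)] by metis
  obtain kc where kc: "?c = kc *s ?a" "kc \<noteq> 0"
    using cross_eq_0_imp_parallel_nonzero[OF nonzero(1,3) par(2)] by metis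
  obtain e f where ef: "det3 ?a e f \<noteq> 0" using nonzero_imp_det3_nonzero nonzero(1) by blast
  \<comment> \<open>When the vertices coincide projectively the collinearities hold for any side points:
    move these to \<open>e, e + f, f\<close>.\<close>
  let ?p = "\<lambda>t. w 8 + t *s (e - w 8)" and ?r = "\<lambda>t. w 5 + t *s (f - w 5)"
    and ?q = "\<lambda>t. w 2 + t *s ((e + f) - w 2)"
  let ?g = "\<lambda>t. det3 ?a (?p t) (?r t) * det3 ?a (?q t) (?r t) * det3 ?a (?p t) (?q t)"
  show ?thesis
  proof (rule P_update_curve[OF amb, where a = "\<lambda>_. ?a" and b = "\<lambda>_. ?b" and c = "\<lambda>_. ?c"
        and p = ?p and q = ?q and r = ?r and g = ?g])
    have "det3 ?a (e + f) f = det3 ?a e f" "det3 ?a e (e + f) = det3 ?a e f"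
      by (simp_all add: det3_def algebra_simps)
    then show "?g 1 \<noteq> 0" using ef by simp
    show "is_polynomial ?g" by (intro poly_intros is_polynomial_det3)
    fix t :: complex assume g: "?g t \<noteq> 0"
    have "P_update w ?a ?b ?c (?p t) (?q t) (?r t) \<in> P_configs"
      unfolding P_update_in_P_configs_iff kb(1) kc(1) by (simp add: det3_def algebra_simps)
    then show "P_update w ?a ?b ?c (?p t) (?q t) (?r t) \<in> collapsed_vertex_configs"
      using g nonzero par by (simp add: collapsed_vertex_configs_def) (simp add: P_update_def)
  qed (intro poly_intros | simp)+
qed

lemma all_parallel_vertices_closure:
  assumes "w \<in> ambient 8" "w 1 \<noteq> 0" "w 4 \<noteq> 0" "w 7 \<noteq> 0"
    and "cross (w 1) (w 4) = 0" "cross (w 1) (w 7) = 0"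
  shows "w \<in> zariski_closure 8 P_realizations"
proof -
  have "collapsed_vertex_configs \<subseteq> zariski_closure 8 P_realizations"
    using collapsed_vertex_configs_subset_closure indep_vertex_configs_subset_closure
      zariski_closure_minimal by blast
  then show ?thesis using all_parallel_vertices_in_closure_collapsed[OF assms] zariski_closure_trans
    by blast
qed

definition rotate_P :: "nat \<Rightarrow> nat" where
  "rotate_P i = (if i = 1 then 4 else if i = 4 then 7 else if i = 7 then 1
     else if i = 8 then 2 else if i = 2 then 5 else if i = 5 then 8 else i)"

lemma rotate_P_range: "i \<in> {1..8} \<Longrightarrow> rotate_P i \<in> {1..8}"
  by (auto simp: rotate_P_def)

lemma inj_on_rotate_P: "inj_on rotate_P {1..8}"
  by (auto simp: inj_on_def rotate_P_def split: if_splits)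

lemma plc_rank_image:
  assumes inj: "inj_on \<pi> E" and "T \<subseteq> E" and "\<And>l. l \<in> L \<Longrightarrow> l \<subseteq> E"
    and L: "(\<lambda>l. \<pi> ` l) ` L = L"
  shows "plc_rank L (\<pi> ` T) = plc_rank L T"
proof -
  have "(\<exists>l\<in>L. \<pi> ` T \<subseteq> l) \<longleftrightarrow> (\<exists>l\<in>L. T \<subseteq> l)"
  proof
    assume "\<exists>l\<in>L. \<pi> ` T \<subseteq> l"
    then obtain l' where "l' \<in> (\<lambda>l. \<pi> ` l) ` L" "\<pi> ` T \<subseteq> l'" by (auto simp: L)
    then obtain l where l: "l \<in> L" "\<pi> ` T \<subseteq> \<pi> ` l" by blast
    have "T \<subseteq> l"
    proof
      fix x assume "x \<in> T"
      then have "\<pi> x \<in> \<pi> ` l" using l(2) by blast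
      then show "x \<in> l"
        using inj_on_image_mem_iff[OF inj _ assms(3)[OF l(1)]] \<open>x \<in> T\<close> assms(2) by blast
    qed
    then show "\<exists>l\<in>L. T \<subseteq> l" using l(1) by blast
  next
    assume "\<exists>l\<in>L. T \<subseteq> l"
    then obtain l where "l \<in> L" "T \<subseteq> l" by blast
    moreover have "\<pi> ` l \<in> L" using \<open>l \<in> L\<close> by (subst L[symmetric]) (rule imageI)
    ultimately show "\<exists>l\<in>L. \<pi> ` T \<subseteq> l" using image_mono by blast
  qed
  moreover have "card (\<pi> ` T) = card T" using card_image inj_on_subset[OF inj assms(2)] by blast
  ultimately show ?thesis by (simp add: plc_rank_def)
qed

lemma rotate_P_in_P_configs: "w \<in> P_configs \<Longrightarrow> reindex 8 rotate_P w \<in> P_configs"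
  unfolding P_configs_iff by (auto simp: reindex_def rotate_P_def ambient_def det3_def algebra_simps)

lemma rotate_P_in_P_realizations:
  assumes "w \<in> P_realizations"
  shows "reindex 8 rotate_P w \<in> P_realizations"
  unfolding P_realizations_def
proof (intro CollectI conjI allI impI)
  fix T assume T: "T \<subseteq> P_points"
  have E: "P_points \<subseteq> {1..8}" by (auto simp: P_points_def)
  have inj: "inj_on rotate_P P_points" using inj_on_subset[OF inj_on_rotate_P E] .
  have "rotate_P ` T \<subseteq> P_points" using T by (auto simp: P_points_def rotate_P_def)
  then have "fam_dependent w (rotate_P ` T) \<longleftrightarrow> plc_rank P_lines (rotate_P ` T) < card (rotate_P ` T)"
    using assms by (simp add: P_realizations_def)
  moreover have "plc_rank P_lines (rotate_P ` T) = plc_rank P_lines T"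
    by (rule plc_rank_image[OF inj T]) (auto simp: P_lines_eq P_points_def rotate_P_def)
  moreover have "card (rotate_P ` T) = card T" using card_image inj_on_subset[OF inj T] by blast
  ultimately show "fam_dependent (reindex 8 rotate_P w) T \<longleftrightarrow> plc_rank P_lines T < card T"
    using fam_dependent_reindex[of T 8 rotate_P w] T E inj_on_subset[OF inj T] by auto
qed simp

lemma rotate_P_in_closure:
  "w \<in> zariski_closure 8 P_realizations \<Longrightarrow> reindex 8 rotate_P w \<in> zariski_closure 8 P_realizations"
  by (rule zariski_closure_reindex) (use rotate_P_range rotate_P_in_P_realizations in auto)

lemma rotate_P_rotate_P_rotate_P:
  "w \<in> ambient 8 \<Longrightarrow> reindex 8 rotate_P (reindex 8 rotate_P (reindex 8 rotate_P w)) = w"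
  by (rule ambient_eqI[OF reindex_in_ambient]) (auto simp: reindex_def rotate_P_def rotate_P_range)

lemma in_closure_if_rotate_P_in_closure:
  assumes "w \<in> ambient 8" "reindex 8 rotate_P w \<in> zariski_closure 8 P_realizations"
  shows "w \<in> zariski_closure 8 P_realizations"
  using rotate_P_in_closure[OF rotate_P_in_closure[OF assms(2)]] rotate_P_rotate_P_rotate_P[OF assms(1)]
  by simp

lemma P_configs_closure:
  assumes w: "w \<in> P_configs" and nonzero: "w 1 \<noteq> 0" "w 4 \<noteq> 0" "w 7 \<noteq> 0"
  shows "w \<in> zariski_closure 8 P_realizations"
proof -
  have amb: "w \<in> ambient 8" using w by (simp add: P_configs_def)
  let ?\<rho> = "reindex 8 rotate_P"
  have \<rho>: "?\<rho> w i = w (rotate_P i)" if "i \<in> {1..8}" for i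
    using that by (simp add: reindex_def)
  have \<rho>\<rho>: "?\<rho> (?\<rho> w) i = w (rotate_P (rotate_P i))" if "i \<in> {1..8}" for i
    using that rotate_P_range by (simp add: reindex_def)
  consider "cross (w 1) (w 4) \<noteq> 0" "cross (w 4) (w 7) \<noteq> 0" "cross (w 1) (w 7) \<noteq> 0"
    | "cross (w 1) (w 4) = 0" "cross (w 1) (w 7) = 0"
    | "cross (w 1) (w 4) = 0" "cross (w 1) (w 7) \<noteq> 0"
    | "cross (w 4) (w 7) = 0" "cross (w 1) (w 4) \<noteq> 0"
    | "cross (w 1) (w 7) = 0" "cross (w 4) (w 7) \<noteq> 0"
    by blast
  then show ?thesis
  proof cases
    case 1
    then have "w \<in> distinct_vertex_configs" using w by (simp add: distinct_vertex_configs_def)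
    then show ?thesis using distinct_vertex_configs_subset_closure_P_realizations by blast
  next
    case 2
    then show ?thesis using all_parallel_vertices_closure[OF amb nonzero] by blast
  next
    case 3
    then show ?thesis using parallel_vertices_closure[OF w nonzero(1,2)] by blast
  next
    case 4
    \<comment> \<open>After one rotation the first two vertices are parallel, after two in case 5.\<close>
    have "?\<rho> w \<in> zariski_closure 8 P_realizations"
      by (rule parallel_vertices_closure) (use 4 w nonzero rotate_P_in_P_configs in
          \<open>simp_all add: \<rho> rotate_P_def cross_commute_eq_0\<close>)
    then show ?thesis by (rule in_closure_if_rotate_P_in_closure[OF amb])
  next
    case 5
    have "?\<rho> (?\<rho> w) \<in> zariski_closure 8 P_realizations"
      by (rule parallel_vertices_closure) (use 5 w nonzero rotate_P_in_P_configs in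
          \<open>simp_all add: \<rho>\<rho> rotate_P_def cross_commute_eq_0\<close>)
    then have "?\<rho> w \<in> zariski_closure 8 P_realizations"
      by (rule in_closure_if_rotate_P_in_closure[OF reindex_in_ambient])
    then show ?thesis by (rule in_closure_if_rotate_P_in_closure[OF amb])
  qed
qed

section \<open>The circuit variety of \<open>C\<close>\<close>

definition lift_to_C :: "(nat \<Rightarrow> complex) \<Rightarrow> config \<Rightarrow> config" where
  "lift_to_C k w = restrict (\<lambda>i. k i *s w (quot_map i)) {1..9}"

lemma quot_map_in_P_points: "i \<in> {1..9} \<Longrightarrow> quot_map i \<in> P_points"
  unfolding quot_map_def P_points_def by auto

lemma lift_to_C_in_realizations:
  assumes w: "w \<in> P_realizations" and k: "\<And>i. i \<in> {1..9} \<Longrightarrow> k i \<noteq> 0"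
  shows "lift_to_C k w \<in> realizations 9 C_dep"
  unfolding realizations_def
proof (intro CollectI conjI allI impI)
  fix S assume S: "S \<subseteq> {1..9::nat}"
  have fin: "finite S" using S finite_subset by blast
  have "quot_map ` S \<subseteq> P_points" using S quot_map_in_P_points by blast
  then have w_dep: "fam_dependent w (quot_map ` S) \<longleftrightarrow>
      plc_rank P_lines (quot_map ` S) < card (quot_map ` S)"
    using w by (simp add: P_realizations_def)
  have "fam_dependent (lift_to_C k w) S \<longleftrightarrow> fam_dependent (\<lambda>i. k i *s w (quot_map i)) S"
    by (rule fam_dependent_cong) (use S in \<open>auto simp: lift_to_C_def\<close>)
  also have "\<dots> \<longleftrightarrow> \<not> inj_on quot_map S \<or> fam_dependent w (quot_map ` S)"
    by (rule fam_dependent_pullback[OF fin]) (use S k in auto)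
  also have "\<dots> \<longleftrightarrow> plc_rank P_lines (quot_map ` S) < card S"
  proof (cases "inj_on quot_map S")
    case True then show ?thesis using w_dep by (simp add: card_image)
  next
    case False
    then have "card (quot_map ` S) \<noteq> card S" using eq_card_imp_inj_on[OF fin] by blast
    then have "card (quot_map ` S) < card S" using card_image_le[OF fin, of quot_map] by simp
    moreover have "plc_rank P_lines (quot_map ` S) \<le> card (quot_map ` S)"
      using fin by (simp add: plc_rank_le_card)
    ultimately show ?thesis using False by simp
  qed
  also have "\<dots> \<longleftrightarrow> C_dep S" using S by (simp add: C_dep_def C_rank_def)
  finally show "fam_dependent (lift_to_C k w) S \<longleftrightarrow> C_dep S" .
qed (auto simp: lift_to_C_def ambient_def)

lemma poly_funs_lift_to_C: "i \<in> {1..9} \<Longrightarrow> (\<lambda>w. lift_to_C k w i $ j) \<in> poly_funs 8"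
proof -
  assume i: "i \<in> {1..9}"
  then have "quot_map i \<in> {1..8}" by (auto simp: quot_map_def)
  then have "(\<lambda>w. (\<lambda>_. k i) w * (\<lambda>w. w (quot_map i) $ j) w) \<in> poly_funs 8"
    by (intro poly_funs.intros)
  then show ?thesis using i by (simp add: lift_to_C_def)
qed

text \<open>Lifts with vanishing scalars are limits of lifts with nonzero ones.\<close>

lemma lift_to_C_in_matroid_variety:
  assumes "w \<in> zariski_closure 8 P_realizations"
  shows "lift_to_C k w \<in> matroid_variety 9 C_dep"
proof -
  have "lift_to_C k w \<in> matroid_variety 9 C_dep" if w: "w \<in> P_realizations" for k w
  proof -
    let ?k = "\<lambda>t i. k i + t * (1 - k i)"
    have "lift_to_C (?k 0) w \<in> zariski_closure 9 (realizations 9 C_dep)"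
    proof (rule zariski_closure_curve[where \<phi> = "\<lambda>t. lift_to_C (?k t) w"
          and g = "\<lambda>t. \<Prod>i\<in>{1..9}. ?k t i" and s = 1])
      show "poly_path (\<lambda>t. lift_to_C (?k t) w i)" if "i \<in> {1..9}" for i
        using that by (simp add: lift_to_C_def) (intro poly_intros)
      show "is_polynomial (\<lambda>t. \<Prod>i\<in>{1..9}. ?k t i)"
        by (intro is_polynomial_prod poly_intros) simp
      show "lift_to_C (?k t) w \<in> realizations 9 C_dep" if "(\<Prod>i\<in>{1..9}. ?k t i) \<noteq> 0" for t
        using that by (intro lift_to_C_in_realizations[OF w]) simp
    qed (auto simp: lift_to_C_def ambient_def)
    then show ?thesis by (simp add: matroid_variety_def)
  qed
  then have "lift_to_C k w \<in> zariski_closure 9 (matroid_variety 9 C_dep)"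
    by (intro zariski_closure_poly_map[where F = "lift_to_C k", OF _ poly_funs_lift_to_C _ assms])
      (auto simp: lift_to_C_def ambient_def)
  then show ?thesis
    using zariski_closure_minimal[of "matroid_variety 9 C_dep" 9 "realizations 9 C_dep"]
    by (auto simp: matroid_variety_def)
qed

lemma exists_nonzero_orthogonal:
  fixes y :: "complex^3"
  shows "\<exists>n::complex^3. n \<noteq> 0 \<and> n$1 * y$1 + n$2 * y$2 + n$3 * y$3 = 0"
proof (cases "y$1 = 0 \<and> y$2 = 0")
  case True
  then show ?thesis by (intro exI[of _ "vector [1, 0, 0]"]) (auto simp: vec3_eq_iff)
next
  case False
  then show ?thesis
    by (intro exI[of _ "vector [- y$2, y$1, 0]"]) (auto simp: vec3_eq_iff algebra_simps)
qed

lemma exists_nonzero_orthogonal2: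
  fixes y z :: "complex^3"
  shows "\<exists>n::complex^3. n \<noteq> 0 \<and> n$1 * y$1 + n$2 * y$2 + n$3 * y$3 = 0 \<and> n$1 * z$1 + n$2 * z$2 + n$3 * z$3 = 0"
proof (cases "cross y z = 0")
  case False
  then show ?thesis by (intro exI[of _ "cross y z"]) (simp add: algebra_simps)
next
  case True
  show ?thesis
  proof (cases "y = 0")
    case True
    then show ?thesis using exists_nonzero_orthogonal[of z] by simp
  next
    case False
    obtain k where k: "z = k *s y" using cross_eq_0_imp_parallel[OF False \<open>cross y z = 0\<close>] by blast
    obtain n :: "complex^3" where "n \<noteq> 0" "n$1 * y$1 + n$2 * y$2 + n$3 * y$3 = 0"
      using exists_nonzero_orthogonal by blast
    moreover have "n$1 * z$1 + n$2 * z$2 + n$3 * z$3 = k * (n$1 * y$1 + n$2 * y$2 + n$3 * y$3)"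
      by (simp add: k algebra_simps)
    ultimately show ?thesis by (intro exI[of _ n]) simp
  qed
qed

text \<open>Any two lines through the origin in the dual plane meet.\<close>

lemma exists_nonzero_det3_eq_0: "\<exists>n. n \<noteq> 0 \<and> det3 n u v = 0 \<and> det3 n p q = 0"
proof -
  have dot: "det3 n a b = n$1 * cross a b $ 1 + n$2 * cross a b $ 2 + n$3 * cross a b $ 3" for n a b
    by (simp add: det3_def algebra_simps)
  show ?thesis unfolding dot using exists_nonzero_orthogonal2 by blast
qed

lemma C_dep_circuits:
  "C_dep {1, 3}" "C_dep {4, 6}" "C_dep {7, 9}"
  "C_dep {1, 4, 8}" "C_dep {1, 6, 8}" "C_dep {3, 4, 8}" "C_dep {3, 6, 8}"
  "C_dep {2, 4, 7}" "C_dep {2, 4, 9}" "C_dep {2, 6, 7}" "C_dep {2, 6, 9}"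
  "C_dep {1, 5, 7}" "C_dep {1, 5, 9}" "C_dep {3, 5, 7}" "C_dep {3, 5, 9}"
  by (simp_all add: C_dep_def C_rank_def plc_rank_def quot_map_def P_lines_def)

text \<open>A pair of parallel points is represented by one of them if it is nonzero, and by a
  suitable nonzero vector otherwise.\<close>

lemma parallel_pair_representative:
  assumes "cross u v = 0"
    and "det3 (if u \<noteq> 0 then u else v) p q = 0" "det3 (if u \<noteq> 0 then u else v) r s = 0"
  obtains a l l' where "a \<noteq> 0" "det3 a p q = 0" "det3 a r s = 0" "u = l *s a" "v = l' *s a"
proof (cases "u = 0")
  case False
  obtain k where "v = k *s u" using cross_eq_0_imp_parallel[OF False assms(1)] by blast
  then show ?thesis using that[of u 1 k] False assms(2,3) by simp
next
  case u: True
  show ?thesis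
  proof (cases "v = 0")
    case False
    then show ?thesis using that[of v 0 1] u assms(2,3) by simp
  next
    case True
    obtain n where "n \<noteq> 0" "det3 n p q = 0" "det3 n r s = 0"
      using exists_nonzero_det3_eq_0 by blast
    then show ?thesis using that[of n 0 0] u True by simp
  qed
qed

lemma circuit_variety_C_conditions:
  assumes "x \<in> circuit_variety 9 C_dep"
  shows "cross (x 1) (x 3) = 0" "cross (x 4) (x 6) = 0" "cross (x 7) (x 9) = 0"
    and "i \<in> {1, 3} \<Longrightarrow> j \<in> {4, 6} \<Longrightarrow> det3 (x i) (x j) (x 8) = 0"
    and "j \<in> {4, 6} \<Longrightarrow> k \<in> {7, 9} \<Longrightarrow> det3 (x 2) (x j) (x k) = 0"
    and "i \<in> {1, 3} \<Longrightarrow> k \<in> {7, 9} \<Longrightarrow> det3 (x i) (x 5) (x k) = 0"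
proof -
  have dep: "fam_dependent x S" if "S \<subseteq> {1..9}" "C_dep S" for S
    using assms that unfolding circuit_variety_def by blast
  have pair: "cross (x i) (x j) = 0" if "C_dep {i, j}" "i \<noteq> j" "i \<in> {1..9}" "j \<in> {1..9}" for i j
    using dep[of "{i, j}"] that fam_dependent_pair by auto
  have triple: "det3 (x i) (x j) (x k) = 0" if "C_dep {i, j, k}" "i \<noteq> j" "i \<noteq> k" "j \<noteq> k"
     "i \<in> {1..9}" "j \<in> {1..9}" "k \<in> {1..9}" for i j k
    using dep[of "{i, j, k}"] that fam_dependent_triple by auto
  note circuits = C_dep_circuits
  show "cross (x 1) (x 3) = 0" "cross (x 4) (x 6) = 0" "cross (x 7) (x 9) = 0"
    by (rule pair; (rule circuits | simp))+
  show "i \<in> {1, 3} \<Longrightarrow> j \<in> {4, 6} \<Longrightarrow> det3 (x i) (x j) (x 8) = 0"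
    using triple[OF circuits(4)] triple[OF circuits(5)] triple[OF circuits(6)] triple[OF circuits(7)]
    by auto
  show "j \<in> {4, 6} \<Longrightarrow> k \<in> {7, 9} \<Longrightarrow> det3 (x 2) (x j) (x k) = 0"
    using triple[OF circuits(8)] triple[OF circuits(9)] triple[OF circuits(10)] triple[OF circuits(11)]
    by auto
  show "i \<in> {1, 3} \<Longrightarrow> k \<in> {7, 9} \<Longrightarrow> det3 (x i) (x 5) (x k) = 0"
    using triple[OF circuits(12)] triple[OF circuits(13)] triple[OF circuits(14)]
      triple[OF circuits(15)] by auto
qed

lemma circuit_variety_C_is_lift:
  assumes x: "x \<in> circuit_variety 9 C_dep"
  obtains w k where "w \<in> P_configs" "w 1 \<noteq> 0" "w 4 \<noteq> 0" "w 7 \<noteq> 0" "x = lift_to_C k w"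
proof -
  note C = circuit_variety_C_conditions[OF x]
  define a0 where "a0 = (if x 1 \<noteq> 0 then x 1 else x 3)"
  define b0 where "b0 = (if x 4 \<noteq> 0 then x 4 else x 6)"
  define c0 where "c0 = (if x 7 \<noteq> 0 then x 7 else x 9)"
  have L1: "det3 a0 b0 (x 8) = 0" unfolding a0_def b0_def using C(4) by simp
  have L2: "det3 (x 2) b0 c0 = 0" unfolding b0_def c0_def using C(5) by simp
  have L3: "det3 a0 (x 5) c0 = 0" unfolding a0_def c0_def using C(6) by simp
  obtain a l1 l3 where a: "a \<noteq> 0" "det3 a b0 (x 8) = 0" "det3 a (x 5) c0 = 0"
    "x 1 = l1 *s a" "x 3 = l3 *s a"
    by (rule parallel_pair_representative[OF C(1), where p = b0 and q = "x 8"
          and r = "x 5" and s = c0]) (use L1 L3 in \<open>simp_all add: a0_def\<close>)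
  have b0: "det3 b0 a (x 8) = 0" "det3 b0 (x 2) c0 = 0"
    using a(2) L2 det3_swap[of a b0] det3_swap[of "x 2" b0] by simp_all
  obtain b l4 l6 where b: "b \<noteq> 0" "det3 b a (x 8) = 0" "det3 b (x 2) c0 = 0"
    "x 4 = l4 *s b" "x 6 = l6 *s b"
    by (rule parallel_pair_representative[OF C(2), where p = a and q = "x 8"
          and r = "x 2" and s = c0]) (use b0 in \<open>simp_all add: b0_def\<close>)
  have "det3 c0 (x 2) b = - det3 b (x 2) c0" "det3 c0 a (x 5) = det3 a (x 5) c0"
    by (simp_all add: det3_def algebra_simps)
  then have c0: "det3 c0 (x 2) b = 0" "det3 c0 a (x 5) = 0" using b(3) a(3) by simp_all
  obtain c l7 l9 where c: "c \<noteq> 0" "det3 c (x 2) b = 0" "det3 c a (x 5) = 0"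
    "x 7 = l7 *s c" "x 9 = l9 *s c"
    by (rule parallel_pair_representative[OF C(3), where p = "x 2" and q = b
          and r = a and s = "x 5"]) (use c0 in \<open>simp_all add: c0_def\<close>)
  define w where "w = P_update x a b c (x 8) (x 2) (x 5)"
  define k where "k i = (if i = 1 then l1 else if i = 3 then l3 else if i = 4 then l4
      else if i = 6 then l6 else if i = 7 then l7 else if i = 9 then l9 else 1)" for i :: nat
  have "w \<in> P_configs"
    unfolding w_def P_update_in_P_configs_iff
    using b(2) c(2,3) det3_swap[of a b] det3_cyclic[of c "x 2" b] det3_cyclic[of "x 2" b c]
      det3_cyclic[of c a "x 5"] det3_cyclic[of a "x 5" c] by simp
  moreover have "w 1 = a" "w 4 = b" "w 7 = c" by (simp_all add: w_def P_update_def)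
  moreover have "x = lift_to_C k w"
  proof (rule ambient_eqI)
    show "x \<in> ambient 9" using x by (simp add: circuit_variety_def)
    fix i :: nat assume "i \<in> {1..9}"
    then show "x i = lift_to_C k w i"
      unfolding one_to_nine by (elim insertE emptyE) (simp_all add: lift_to_C_def k_def w_def
          P_update_def quot_map_def a(4,5) a(4)[simplified] b(4,5) c(4,5))
  qed (auto simp: lift_to_C_def ambient_def)
  ultimately show ?thesis using that a(1) b(1) c(1) by simp
qed

lemma circuit_variety_C_eq_matroid_variety: "circuit_variety 9 C_dep = matroid_variety 9 C_dep"
proof
  show "circuit_variety 9 C_dep \<subseteq> matroid_variety 9 C_dep"
  proof
    fix x assume "x \<in> circuit_variety 9 C_dep"
    then obtain w k where "w \<in> P_configs" "w 1 \<noteq> 0" "w 4 \<noteq> 0" "w 7 \<noteq> 0" "x = lift_to_C k w"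
      by (rule circuit_variety_C_is_lift)
    then show "x \<in> matroid_variety 9 C_dep"
      using P_configs_closure lift_to_C_in_matroid_variety by blast
  qed
qed (rule matroid_variety_subset_circuit_variety)

section \<open>Permuted matroids\<close>

lemma perm_dep_image_iff:
  assumes inj: "inj_on \<sigma> {1..d}" and K: "\<And>S. K S \<Longrightarrow> S \<subseteq> {1..d}" and S: "S \<subseteq> {1..d}"
  shows "perm_dep \<sigma> K (\<sigma> ` S) \<longleftrightarrow> K S"
proof
  assume "perm_dep \<sigma> K (\<sigma> ` S)"
  then obtain S' where "K S'" "\<sigma> ` S = \<sigma> ` S'" by (auto simp: perm_dep_def)
  moreover have "S = S'" using inj_on_image_eq_iff[OF inj S K[OF \<open>K S'\<close>]] calculation(2) by blast
  ultimately show "K S" by simp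
qed (auto simp: perm_dep_def)

context
  fixes d :: nat and \<sigma> :: "nat \<Rightarrow> nat" and K :: "nat set \<Rightarrow> bool"
  assumes bij: "bij_betw \<sigma> {1..d} {1..d}" and K_subset: "\<forall>S. K S \<longrightarrow> S \<subseteq> {1..d}"
begin

private lemma K: "K S \<Longrightarrow> S \<subseteq> {1..d}"
  using K_subset by blast

private lemma inj: "inj_on \<sigma> {1..d}"
  using bij by (rule bij_betw_imp_inj_on)

private lemma fam_dependent_reindex_perm:
  "S \<subseteq> {1..d} \<Longrightarrow> fam_dependent (reindex d \<sigma> \<gamma>) S \<longleftrightarrow> fam_dependent \<gamma> (\<sigma> ` S)"
  using fam_dependent_reindex inj_on_subset[OF inj] by blast

lemma realizations_perm_dep_iff:
  assumes "\<gamma> \<in> ambient d"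
  shows "\<gamma> \<in> realizations d (perm_dep \<sigma> K) \<longleftrightarrow> reindex d \<sigma> \<gamma> \<in> realizations d K"
proof -
  have "(\<forall>T. T \<subseteq> \<sigma> ` {1..d} \<longrightarrow> fam_dependent \<gamma> T = perm_dep \<sigma> K T)
      \<longleftrightarrow> (\<forall>S. S \<subseteq> {1..d} \<longrightarrow> fam_dependent \<gamma> (\<sigma> ` S) = perm_dep \<sigma> K (\<sigma> ` S))"
    by (rule all_subset_image)
  then show ?thesis
    using assms bij_betw_imp_surj_on[OF bij] fam_dependent_reindex_perm perm_dep_image_iff[OF inj K]
    by (simp add: realizations_def)
qed

lemma circuit_variety_perm_dep_iff:
  assumes "\<gamma> \<in> ambient d"
  shows "\<gamma> \<in> circuit_variety d (perm_dep \<sigma> K) \<longleftrightarrow> reindex d \<sigma> \<gamma> \<in> circuit_variety d K"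
proof -
  have "(\<forall>T\<subseteq>{1..d}. perm_dep \<sigma> K T \<longrightarrow> fam_dependent \<gamma> T)
      \<longleftrightarrow> (\<forall>S\<subseteq>{1..d}. K S \<longrightarrow> fam_dependent \<gamma> (\<sigma> ` S))"
  proof (intro iffI allI impI)
    fix S assume "\<forall>T\<subseteq>{1..d}. perm_dep \<sigma> K T \<longrightarrow> fam_dependent \<gamma> T" "S \<subseteq> {1..d}" "K S"
    moreover have "\<sigma> ` S \<subseteq> {1..d}" using \<open>S \<subseteq> {1..d}\<close> bij_betw_imp_surj_on[OF bij] by blast
    ultimately show "fam_dependent \<gamma> (\<sigma> ` S)" by (auto simp: perm_dep_def)
  next
    fix T assume "\<forall>S\<subseteq>{1..d}. K S \<longrightarrow> fam_dependent \<gamma> (\<sigma> ` S)" "perm_dep \<sigma> K T"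
    then show "fam_dependent \<gamma> T" using K by (auto simp: perm_dep_def)
  qed
  then show ?thesis
    using assms fam_dependent_reindex_perm by (simp add: circuit_variety_def)
qed

lemma matroid_variety_perm_dep_iff:
  assumes "\<gamma> \<in> ambient d"
  shows "\<gamma> \<in> matroid_variety d (perm_dep \<sigma> K) \<longleftrightarrow> reindex d \<sigma> \<gamma> \<in> matroid_variety d K"
proof -
  define \<tau> where "\<tau> = the_inv_into {1..d} \<sigma>"
  have bij\<tau>: "bij_betw \<tau> {1..d} {1..d}" unfolding \<tau>_def by (rule bij_betw_the_inv_into[OF bij])
  have \<tau>: "\<tau> i \<in> {1..d}" "\<sigma> (\<tau> i) = i" if "i \<in> {1..d}" for i
    using bij_betw_apply[OF bij\<tau> that] f_the_inv_into_f_bij_betw[OF bij that] unfolding \<tau>_def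
    by simp_all
  have \<sigma>: "\<sigma> i \<in> {1..d}" "\<tau> (\<sigma> i) = i" if "i \<in> {1..d}" for i
    using that bij_betw_apply[OF bij] the_inv_into_f_f[OF inj] unfolding \<tau>_def by auto
  have \<tau>\<sigma>: "reindex d \<tau> (reindex d \<sigma> x) = x" and \<sigma>\<tau>: "reindex d \<sigma> (reindex d \<tau> x) = x"
    if "x \<in> ambient d" for x
    using reindex_reindex[OF that] \<tau> \<sigma> by blast+
  show ?thesis
    unfolding matroid_variety_def
  proof
    assume "\<gamma> \<in> zariski_closure d (realizations d (perm_dep \<sigma> K))"
    then show "reindex d \<sigma> \<gamma> \<in> zariski_closure d (realizations d K)"
      by (rule zariski_closure_reindex[rotated 2])
        (use \<sigma> realizations_perm_dep_iff in \<open>auto simp: realizations_def\<close>)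
  next
    assume "reindex d \<sigma> \<gamma> \<in> zariski_closure d (realizations d K)"
    then have "reindex d \<tau> (reindex d \<sigma> \<gamma>) \<in> zariski_closure d (realizations d (perm_dep \<sigma> K))"
      by (rule zariski_closure_reindex[rotated 2])
        (use \<tau> \<sigma>\<tau> realizations_perm_dep_iff in \<open>auto simp: realizations_def\<close>)
    then show "\<gamma> \<in> zariski_closure d (realizations d (perm_dep \<sigma> K))" using \<tau>\<sigma> assms by simp
  qed
qed


lemma circuit_variety_perm_dep:
  "circuit_variety d (perm_dep \<sigma> K) = {\<gamma> \<in> ambient d. reindex d \<sigma> \<gamma> \<in> circuit_variety d K}"
  using circuit_variety_perm_dep_iff circuit_variety_subset_ambient by blast

lemma matroid_variety_perm_dep:
  "matroid_variety d (perm_dep \<sigma> K) = {\<gamma> \<in> ambient d. reindex d \<sigma> \<gamma> \<in> matroid_variety d K}"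
  using matroid_variety_perm_dep_iff matroid_variety_subset_ambient by blast

end

lemma perm_dep_MP_dep:
  assumes "automorphism_MP \<sigma>" "T \<subseteq> {1..9}"
  shows "perm_dep \<sigma> MP_dep T \<longleftrightarrow> MP_dep T"
proof -
  have bij: "bij_betw \<sigma> {1..9} {1..9}" and aut: "\<And>S. S \<subseteq> {1..9} \<Longrightarrow> MP_dep S \<longleftrightarrow> MP_dep (\<sigma> ` S)"
    using assms(1) by (auto simp: automorphism_MP_def)
  obtain S where S: "S \<subseteq> {1..9}" "T = \<sigma> ` S"
    using assms(2) bij_betw_imp_surj_on[OF bij] by (metis subset_image_iff)
  have "perm_dep \<sigma> MP_dep (\<sigma> ` S) \<longleftrightarrow> MP_dep S"
    by (rule perm_dep_image_iff[OF bij_betw_imp_inj_on[OF bij] _ S(1)]) (simp add: MP_dep_def)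
  also have "\<dots> \<longleftrightarrow> MP_dep (\<sigma> ` S)" using aut[OF S(1)] .
  finally show ?thesis using S(2) by simp
qed

lemma matroid_variety_cong:
  "(\<And>S. S \<subseteq> {1..d} \<Longrightarrow> K S \<longleftrightarrow> K' S) \<Longrightarrow> matroid_variety d K = matroid_variety d K'"
  unfolding matroid_variety_def realizations_def by simp

lemma matroid_variety_perm_dep_MP_dep:
  "automorphism_MP \<sigma> \<Longrightarrow> matroid_variety 9 (perm_dep \<sigma> MP_dep) = matroid_variety 9 MP_dep"
  by (rule matroid_variety_cong) (rule perm_dep_MP_dep)

theorem mainTheorem12:
  assumes "automorphism_MP \<sigma>"
  shows "circuit_variety 9 (perm_dep \<sigma> C_dep) = matroid_variety 9 (perm_dep \<sigma> C_dep)
         \<and> matroid_variety 9 (perm_dep \<sigma> C_dep) \<subseteq> matroid_variety 9 MP_dep"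
proof -
  have bij: "bij_betw \<sigma> {1..9} {1..9}" using assms by (simp add: automorphism_MP_def)
  have C: "\<forall>S. C_dep S \<longrightarrow> S \<subseteq> {1..9}" and MP: "\<forall>S. MP_dep S \<longrightarrow> S \<subseteq> {1..9}"
    by (simp_all add: C_dep_def MP_dep_def)
  have "matroid_variety 9 (perm_dep \<sigma> C_dep) \<subseteq> matroid_variety 9 (perm_dep \<sigma> MP_dep)"
    using matroid_variety_C_subset_matroid_variety_MP
    unfolding matroid_variety_perm_dep[OF bij C] matroid_variety_perm_dep[OF bij MP] by blast
  then show ?thesis
    unfolding matroid_variety_perm_dep_MP_dep[OF assms] circuit_variety_perm_dep[OF bij C]
      matroid_variety_perm_dep[OF bij C] circuit_variety_C_eq_matroid_variety
    by simp
qed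

end
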